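(* Let $P$ be the uniform probability distribution on the (closed) equilateral triangle $\triangle$ with vertices $(0,0)$, $(1,0)$, $(\frac12,\frac{\sqrt3}{2})$. Then there are exactly three optimal sets of two-means for $P$, and the corresponding quantization error is $V_2(P)=0.0532767$ (to seven decimal places). Moreover, if $\triangle$ is cut by a straight line parallel to one of its sides into an isosceles trapezoid and an equilateral triangle whose areas are in the golden ratio $g=\frac{1+\sqrt5}{2}$ (area of trapezoid : area of small triangle $= g$), then the centroids of the isosceles trapezoid and of the small equilateral triangle form an optimal set of two-means for $P$.
   Context: For a Borel probability measure $P$ on $\mathbb R^2$ with finite second moment and $n\ge1$, the $n$th quantization error is $V_n(P)=\inf\{\int \min_{a\in\alpha}\|x-a\|^2\,dP(x): \alpha\subset\mathbb R^2,\ \mathrm{card}(\alpha)\le n\}$, where $\|\cdot\|$ is the Euclidean norm. A set $\alpha$ with $\mathrm{card}(\alpha)\le n$ attaining this infimum is called an optimal set of $n$-means. The uniform distribution on $\triangle$ has density $\frac{4}{\sqrt3}$ on $\triangle$ and $0$ elsewhere. *)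

theory Defs
  imports "HOL-Analysis.Analysis" "HOL-Probability.Probability"
begin

text \<open>Points of the plane are pairs of reals; the norm on real \<times> real is the Euclidean one.\<close>

definition tri :: "(real \<times> real) set" where
  "tri = convex hull {(0,0), (1,0), (1/2, sqrt 3 / 2)}"

definition P_tri :: "(real \<times> real) measure" where
  "P_tri = density lborel (\<lambda>x. ennreal (4 / sqrt 3) * indicator tri x)"

definition distortion :: "(real \<times> real) measure \<Rightarrow> (real \<times> real) set \<Rightarrow> ennreal" where
  "distortion P \<alpha> = (\<integral>\<^sup>+ x. ennreal (Min ((\<lambda>a. (dist x a)\<^sup>2) ` \<alpha>)) \<partial>P)"

definition admissible :: "nat \<Rightarrow> (real \<times> real) set \<Rightarrow> bool" where
  "admissible n \<alpha> \<longleftrightarrow> finite \<alpha> \<and> \<alpha> \<noteq> {} \<and> card \<alpha> \<le> n"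

definition quant_err :: "(real \<times> real) measure \<Rightarrow> nat \<Rightarrow> ennreal" where
  "quant_err P n = (INF \<alpha> \<in> {\<alpha>. admissible n \<alpha>}. distortion P \<alpha>)"

definition optimal_set :: "(real \<times> real) measure \<Rightarrow> nat \<Rightarrow> (real \<times> real) set \<Rightarrow> bool" where
  "optimal_set P n \<alpha> \<longleftrightarrow> admissible n \<alpha> \<and> distortion P \<alpha> = quant_err P n"

definition centroid :: "(real \<times> real) set \<Rightarrow> real \<times> real" where
  "centroid S = (1 / measure lborel S) *\<^sub>R (LINT x:S|lborel. x)"

definition golden :: real where
  "golden = (1 + sqrt 5) / 2"

end

theory Submission
  imports Defs
begin

text \<open>
  Fix a vertex P of the triangle and the affine chart that maps the reference triangle
  {x, y \<ge> 0, x + y \<le> 1} onto it, sending the origin to P. For two points a, b the function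
  |x - b|^2 - |x - a|^2 is affine in x, so (after possibly swapping a and b) either a is at least
  as close as b on the whole triangle, or the Voronoi cell of a is the corner triangle at some
  vertex P with legs u, v \<le> 1 along the two edges at P. In the second case the distortion is an
  explicit function of u, v and the chart coordinates of a and b. Completing squares in a and b
  (the parallel axis theorem for the two cells) bounds it below by 5/12 - split_gain u v / 9, with
  equality iff a and b are the centroids of their cells; and split_gain u v \<le> 15 \<tau> - 6 for
  \<tau> = (sqrt 5 - 1)/2, with equality only at u = v = \<tau>, because for fixed uv the gap is a concave
  quadratic in u + v. Hence V_2 = (23 - 10 sqrt 5)/12, attained exactly by the three
  pairs of cell centroids with u = v = \<tau>, one for each vertex; and cutting at the homothety
  ratio \<tau> is exactly the golden-ratio cut of the statement.
\<close>

section \<open>Change of variables and integrals over right triangles\<close>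

lemma borel_measurable_swap: "(\<lambda>z::real \<times> real. (snd z, fst z)) \<in> borel_measurable borel"
  by (intro borel_measurable_continuous_onI continuous_intros)

lemma nn_integral_lborel_swap:
  fixes f :: "real \<times> real \<Rightarrow> ennreal"
  assumes [measurable]: "f \<in> borel_measurable borel"
  shows "(\<integral>\<^sup>+z. f z \<partial>lborel) = (\<integral>\<^sup>+z. f (snd z, fst z) \<partial>lborel)"
proof -
  have "(\<integral>\<^sup>+z. f z \<partial>lborel) = (\<integral>\<^sup>+y. (\<integral>\<^sup>+x. f (x, y) \<partial>lborel) \<partial>lborel)"
    by (simp add: lborel_prod lborel_pair.nn_integral_snd)
  also have "\<dots> = (\<integral>\<^sup>+z. f (snd z, fst z) \<partial>(lborel \<Otimes>\<^sub>M lborel))"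
    by (subst lborel.nn_integral_fst[symmetric]) auto
  finally show ?thesis by (simp add: lborel_prod)
qed

lemma nn_integral_lborel_shear_fst:
  fixes f :: "real \<times> real \<Rightarrow> ennreal"
  assumes [measurable]: "f \<in> borel_measurable borel" and "a \<noteq> 0"
  shows "(\<integral>\<^sup>+x. f x \<partial>lborel) = ennreal \<bar>a\<bar> * (\<integral>\<^sup>+z. f (t + a * fst z + k * snd z, snd z) \<partial>lborel)"
proof -
  have "(\<integral>\<^sup>+x. f x \<partial>lborel) = (\<integral>\<^sup>+y. (\<integral>\<^sup>+x. f (x, y) \<partial>lborel) \<partial>lborel)"
    by (simp add: lborel_prod lborel_pair.nn_integral_snd)
  also have "\<dots> = (\<integral>\<^sup>+y. ennreal \<bar>a\<bar> * (\<integral>\<^sup>+x. f ((t + k * y) + a * x, y) \<partial>lborel) \<partial>lborel)"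
    using \<open>a \<noteq> 0\<close> by (intro nn_integral_cong nn_integral_real_affine) auto
  also have "\<dots> = ennreal \<bar>a\<bar> * (\<integral>\<^sup>+y. (\<integral>\<^sup>+x. f ((t + k * y) + a * x, y) \<partial>lborel) \<partial>lborel)"
    by (rule nn_integral_cmult) measurable
  also have "(\<integral>\<^sup>+y. (\<integral>\<^sup>+x. f ((t + k * y) + a * x, y) \<partial>lborel) \<partial>lborel)
      = (\<integral>\<^sup>+z. f (t + a * fst z + k * snd z, snd z) \<partial>(lborel \<Otimes>\<^sub>M lborel))"
    by (subst lborel_pair.nn_integral_snd[symmetric]) (auto simp: algebra_simps)
  finally show ?thesis by (simp add: lborel_prod)
qed

lemma nn_integral_lborel_shear_snd:
  fixes f :: "real \<times> real \<Rightarrow> ennreal"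
  assumes [measurable]: "f \<in> borel_measurable borel" and "d \<noteq> 0"
  shows "(\<integral>\<^sup>+x. f x \<partial>lborel) = ennreal \<bar>d\<bar> * (\<integral>\<^sup>+z. f (fst z, t + d * snd z + k * fst z) \<partial>lborel)"
proof -
  have [measurable]: "(\<lambda>z. f (snd z, fst z)) \<in> borel_measurable borel"
    using measurable_compose[OF borel_measurable_swap assms(1)] by (simp add: o_def)
  have [measurable]: "(\<lambda>z. f (snd z, t + d * fst z + k * snd z)) \<in> borel_measurable borel"
    by (rule measurable_compose[OF _ assms(1)]) (intro borel_measurable_continuous_onI continuous_intros)
  have "(\<integral>\<^sup>+x. f x \<partial>lborel) = (\<integral>\<^sup>+z. f (snd z, fst z) \<partial>lborel)"
    by (rule nn_integral_lborel_swap) measurable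
  also have "\<dots> = ennreal \<bar>d\<bar> * (\<integral>\<^sup>+z. f (snd z, t + d * fst z + k * snd z) \<partial>lborel)"
    using nn_integral_lborel_shear_fst[of "\<lambda>z. f (snd z, fst z)" d t k] \<open>d \<noteq> 0\<close> by simp
  also have "(\<integral>\<^sup>+z. f (snd z, t + d * fst z + k * snd z) \<partial>lborel)
      = (\<integral>\<^sup>+z. f (fst z, t + d * snd z + k * fst z) \<partial>lborel)"
    by (subst nn_integral_lborel_swap) simp_all
  finally show ?thesis .
qed

lemma nn_integral_lborel_affine:
  fixes f :: "real \<times> real \<Rightarrow> ennreal"
  assumes "f \<in> borel_measurable borel" and "a * d - b * c \<noteq> 0"
  shows "(\<integral>\<^sup>+x. f x \<partial>lborel) = ennreal \<bar>a * d - b * c\<bar> *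
     (\<integral>\<^sup>+z. f (px + a * fst z + b * snd z, py + c * fst z + d * snd z) \<partial>lborel)"
proof -
  have affine: "(\<integral>\<^sup>+x. g x \<partial>lborel) = ennreal \<bar>a * d - b * c\<bar> *
      (\<integral>\<^sup>+z. g (px + a * fst z + b * snd z, py + c * fst z + d * snd z) \<partial>lborel)"
    if [measurable]: "g \<in> borel_measurable borel" and "a \<noteq> 0" "a * d - b * c \<noteq> 0"
    for g :: "real \<times> real \<Rightarrow> ennreal" and a b c d px py :: real
  proof -
    define e where "e = (a * d - b * c) / a"
    have "e \<noteq> 0" using that by (simp add: e_def)
    define h where "h w = g (fst w, (py - c / a * px) + e * snd w + (c / a) * fst w)" for w
    have "(\<lambda>w::real \<times> real. (fst w, (py - c / a * px) + e * snd w + (c / a) * fst w)) \<in> borel_measurable borel"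
      by (intro borel_measurable_continuous_onI continuous_intros)
    then have [measurable]: "h \<in> borel_measurable borel"
      unfolding h_def using measurable_compose that(1) by (simp add: o_def)
    have "(\<integral>\<^sup>+x. g x \<partial>lborel) = ennreal \<bar>e\<bar> * (\<integral>\<^sup>+w. h w \<partial>lborel)"
      unfolding h_def by (rule nn_integral_lborel_shear_snd[OF that(1) \<open>e \<noteq> 0\<close>])
    also have "(\<integral>\<^sup>+w. h w \<partial>lborel) = ennreal \<bar>a\<bar> * (\<integral>\<^sup>+z. h (px + a * fst z + b * snd z, snd z) \<partial>lborel)"
      by (rule nn_integral_lborel_shear_fst[OF _ \<open>a \<noteq> 0\<close>]) measurable
    also have "(\<lambda>z. h (px + a * fst z + b * snd z, snd z))
        = (\<lambda>z. g (px + a * fst z + b * snd z, py + c * fst z + d * snd z))"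
      using \<open>a \<noteq> 0\<close> by (auto simp: h_def e_def field_simps intro!: ext arg_cong[where f=g])
    also have "\<bar>e\<bar> * \<bar>a\<bar> = \<bar>a * d - b * c\<bar>"
      using \<open>a \<noteq> 0\<close> unfolding e_def abs_mult[symmetric] by simp
    then have "ennreal \<bar>e\<bar> * (ennreal \<bar>a\<bar> * X) = ennreal \<bar>a * d - b * c\<bar> * X" for X
      by (simp add: mult.assoc[symmetric] ennreal_mult'[symmetric])
    finally show ?thesis .
  qed
  show ?thesis
  proof (cases "a = 0")
    case True
    have [measurable]: "(\<lambda>z. f (snd z, fst z)) \<in> borel_measurable borel"
      using measurable_compose[OF borel_measurable_swap assms(1)] by (simp add: o_def)
    have "c \<noteq> 0" "c * b - d * 0 \<noteq> 0" using True assms(2) by auto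
    from affine[OF _ this, of "\<lambda>z. f (snd z, fst z)" py px]
    show ?thesis using True by (simp add: nn_integral_lborel_swap[OF assms(1)] abs_mult mult.commute)
  qed (use affine assms in blast)
qed

lemma nn_integral_lborel_scale:
  fixes f :: "real \<times> real \<Rightarrow> ennreal"
  assumes "f \<in> borel_measurable borel" "0 < u" "0 < v"
  shows "(\<integral>\<^sup>+x. f x \<partial>lborel) = ennreal (u * v) * (\<integral>\<^sup>+z. f (u * fst z, v * snd z) \<partial>lborel)"
  using nn_integral_lborel_affine[OF assms(1), of u v 0 0 0 0] assms(2,3) by simp

lemma nn_integral_FTC_Icc_real:
  fixes f F :: "real \<Rightarrow> real"
  assumes "a \<le> b" and nonneg: "\<And>x. a \<le> x \<Longrightarrow> x \<le> b \<Longrightarrow> 0 \<le> f x"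
    and deriv: "\<And>x. (F has_real_derivative f x) (at x)"
  shows "(\<integral>\<^sup>+x. ennreal (f x) * indicator {a..b} x \<partial>lborel) = ennreal (F b - F a)"
    and "0 \<le> F b - F a"
proof -
  have integral: "(f has_integral F b - F a) {a..b}"
    using \<open>a \<le> b\<close> deriv
    by (intro fundamental_theorem_of_calculus)
       (auto simp: has_real_derivative_iff_has_vector_derivative[symmetric] intro: has_field_derivative_at_within)
  then show "0 \<le> F b - F a"
    using nonneg by (intro has_integral_nonneg[OF integral]) auto
  show "(\<integral>\<^sup>+x. ennreal (f x) * indicator {a..b} x \<partial>lborel) = ennreal (F b - F a)"
    using nonneg integral by (intro nn_integral_has_integral_lebesgue') auto
qed

definition right_tri :: "real \<Rightarrow> real \<Rightarrow> (real \<times> real) set" where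
  "right_tri u v = {z. 0 \<le> fst z \<and> 0 \<le> snd z \<and> v * fst z + u * snd z \<le> u * v}"

lemma right_tri_sets [measurable]: "right_tri u v \<in> sets borel"
  unfolding right_tri_def
  by (intro borel_closed closed_Collect_conj closed_Collect_le continuous_intros)

lemma nn_integral_unit_right_tri_iterated:
  fixes g :: "real \<times> real \<Rightarrow> ennreal"
  assumes [measurable]: "g \<in> borel_measurable borel"
  shows "(\<integral>\<^sup>+z. indicator (right_tri 1 1) z * g z \<partial>lborel)
    = (\<integral>\<^sup>+y. indicator {0..1} y * (\<integral>\<^sup>+x. indicator {0..1 - y} x * g (x, y) \<partial>lborel) \<partial>lborel)"
proof -
  have "(\<integral>\<^sup>+z. indicator (right_tri 1 1) z * g z \<partial>lborel)
      = (\<integral>\<^sup>+z. indicator (right_tri 1 1) z * g z \<partial>(lborel \<Otimes>\<^sub>M lborel))"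
    by (simp add: lborel_prod)
  also have "\<dots> = (\<integral>\<^sup>+y. (\<integral>\<^sup>+x. indicator (right_tri 1 1) (x, y) * g (x, y) \<partial>lborel) \<partial>lborel)"
    by (rule lborel_pair.nn_integral_snd[symmetric]) (simp add: lborel_prod)
  also have "\<dots> = (\<integral>\<^sup>+y. indicator {0..1} y * (\<integral>\<^sup>+x. indicator {0..1 - y} x * g (x, y) \<partial>lborel) \<partial>lborel)"
  proof (intro nn_integral_cong)
    fix y :: real
    have "indicator (right_tri 1 1) (x, y) = (indicator {0..1} y * indicator {0..1 - y} x :: ennreal)" for x
      by (auto simp: right_tri_def split: split_indicator)
    then show "(\<integral>\<^sup>+x. indicator (right_tri 1 1) (x, y) * g (x, y) \<partial>lborel)
        = indicator {0..1} y * (\<integral>\<^sup>+x. indicator {0..1 - y} x * g (x, y) \<partial>lborel)"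
      by (simp add: nn_integral_cmult mult.assoc)
  qed
  finally show ?thesis .
qed

lemma nn_integral_quadratic_unit_right_tri:
  fixes p :: "real \<times> real \<Rightarrow> real"
  assumes nonneg: "\<And>z. z \<in> right_tri 1 1 \<Longrightarrow> 0 \<le> p z"
    and p: "\<And>x y. p (x, y) = c0 + c1 * x + c2 * y + c11 * x^2 + c12 * x * y + c22 * y^2"
  defines "I \<equiv> c0/2 + c1/6 + c2/6 + c11/12 + c12/24 + c22/12"
  shows "(\<integral>\<^sup>+z. indicator (right_tri 1 1) z * ennreal (p z) \<partial>lborel) = ennreal I" and "0 \<le> I"
proof -
  have "p = (\<lambda>z. c0 + c1 * fst z + c2 * snd z + c11 * (fst z)^2 + c12 * fst z * snd z + c22 * (snd z)^2)"
    by (auto simp: p)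
  then have [measurable]: "p \<in> borel_measurable borel"
    by (auto intro!: borel_measurable_continuous_onI continuous_intros)
  define F where "F y x = c0 * x + c1 * x^2/2 + c2 * y * x + c11 * x^3/3 + c12 * y * x^2/2 + c22 * y^2 * x"
    for y x :: real
  define Q where "Q y = F y (1 - y) - F y 0" for y
  define H where "H y = - c0 * (1 - y)^2/2 - c1 * (1 - y)^3/6 + c2 * (y^2/2 - y^3/3) - c11 * (1 - y)^4/12
       + c12 * (y^2/4 - y^3/3 + y^4/8) + c22 * (y^3/3 - y^4/4)" for y :: real
  have inner: "(\<integral>\<^sup>+x. indicator {0..1 - y} x * ennreal (p (x, y)) \<partial>lborel) = ennreal (Q y)" "0 \<le> Q y"
    if "0 \<le> y" "y \<le> 1" for y
  proof -
    have "0 \<le> p (x, y)" if "0 \<le> x" "x \<le> 1 - y" for x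
      using nonneg[of "(x, y)"] that \<open>0 \<le> y\<close> by (auto simp: right_tri_def)
    moreover have "(F y has_real_derivative p (x, y)) (at x)" for x
      unfolding F_def p by (auto intro!: derivative_eq_intros simp: field_simps power2_eq_square)
    ultimately show "(\<integral>\<^sup>+x. indicator {0..1 - y} x * ennreal (p (x, y)) \<partial>lborel) = ennreal (Q y)" "0 \<le> Q y"
      using \<open>y \<le> 1\<close> nn_integral_FTC_Icc_real[of 0 "1 - y" "\<lambda>x. p (x, y)" "F y"] by (auto simp: Q_def mult.commute)
  qed
  moreover have "(H has_real_derivative Q y) (at y)" for y
    unfolding H_def Q_def F_def
    by (auto intro!: derivative_eq_intros simp: field_simps power2_eq_square power3_eq_cube)
  ultimately have outer: "(\<integral>\<^sup>+y. ennreal (Q y) * indicator {0..1} y \<partial>lborel) = ennreal (H 1 - H 0)"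
      "0 \<le> H 1 - H 0"
    using nn_integral_FTC_Icc_real[of 0 1 Q H] by auto
  have "H 1 - H 0 = I"
    by (simp add: H_def I_def field_simps)
  have p_meas: "(\<lambda>z. ennreal (p z)) \<in> borel_measurable borel"
    by measurable
  have "(\<integral>\<^sup>+z. indicator (right_tri 1 1) z * ennreal (p z) \<partial>lborel)
      = (\<integral>\<^sup>+y. ennreal (Q y) * indicator {0..1} y \<partial>lborel)"
    unfolding nn_integral_unit_right_tri_iterated[OF p_meas]
    using inner(1) by (intro nn_integral_cong) (auto simp: mult.commute split: split_indicator)
  then show "(\<integral>\<^sup>+z. indicator (right_tri 1 1) z * ennreal (p z) \<partial>lborel) = ennreal I"
    unfolding outer(1) \<open>H 1 - H 0 = I\<close> .
  show "0 \<le> I"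
    using outer(2) \<open>H 1 - H 0 = I\<close> by simp
qed

lemma nn_integral_quadratic_right_tri:
  fixes p :: "real \<times> real \<Rightarrow> real"
  assumes "0 < u" "0 < v" and nonneg: "\<And>z. z \<in> right_tri u v \<Longrightarrow> 0 \<le> p z"
    and p: "\<And>x y. p (x, y) = c0 + c1 * x + c2 * y + c11 * x^2 + c12 * x * y + c22 * y^2"
  defines "I \<equiv> u * v * (c0/2 + c1 * u/6 + c2 * v/6 + c11 * u^2/12 + c12 * u * v/24 + c22 * v^2/12)"
  shows "(\<integral>\<^sup>+z. indicator (right_tri u v) z * ennreal (p z) \<partial>lborel) = ennreal I" and "0 \<le> I"
proof -
  have "p = (\<lambda>z. c0 + c1 * fst z + c2 * snd z + c11 * (fst z)^2 + c12 * fst z * snd z + c22 * (snd z)^2)"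
    by (auto simp: p)
  then have [measurable]: "p \<in> borel_measurable borel"
    by (auto intro!: borel_measurable_continuous_onI continuous_intros)
  have scale: "(u * fst z, v * snd z) \<in> right_tri u v \<longleftrightarrow> z \<in> right_tri 1 1" for z
  proof -
    have "v * (u * fst z) + u * (v * snd z) = (u * v) * (fst z + snd z)"
      by (simp add: algebra_simps)
    then show ?thesis
      using assms(1,2) by (simp add: right_tri_def zero_le_mult_iff)
  qed
  define p1 where "p1 z = p (u * fst z, v * snd z)" for z
  have p1: "p1 (x, y) = c0 + (c1 * u) * x + (c2 * v) * y + (c11 * u^2) * x^2 + (c12 * u * v) * x * y
      + (c22 * v^2) * y^2" for x y
    by (simp add: p1_def p power2_eq_square)
  have p1_nonneg: "0 \<le> p1 z" if "z \<in> right_tri 1 1" for z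
    using nonneg scale that by (simp add: p1_def)
  note unit = nn_integral_quadratic_unit_right_tri[OF p1_nonneg p1]
  have "(\<integral>\<^sup>+z. indicator (right_tri u v) z * ennreal (p z) \<partial>lborel)
      = ennreal (u * v) * (\<integral>\<^sup>+z. indicator (right_tri 1 1) z * ennreal (p1 z) \<partial>lborel)"
    using assms(1,2) by (subst nn_integral_lborel_scale[where u = u and v = v]) (simp_all add: scale p1_def indicator_def)
  also have "\<dots> = ennreal (u * v) * ennreal (c0/2 + c1 * u/6 + c2 * v/6 + c11 * u^2/12 + c12 * u * v/24 + c22 * v^2/12)"
    using unit(1) by simp
  also have "\<dots> = ennreal I"
    using assms(1,2) unfolding I_def by (simp add: ennreal_mult'[symmetric])
  finally show "(\<integral>\<^sup>+z. indicator (right_tri u v) z * ennreal (p z) \<partial>lborel) = ennreal I" .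
  show "0 \<le> I"
    using assms(1,2) unit(2) unfolding I_def by (intro mult_nonneg_nonneg) auto
qed

lemma mem_right_tri_iff:
  assumes "0 < u" "0 < v"
  shows "z \<in> right_tri u v \<longleftrightarrow> 0 \<le> fst z \<and> 0 \<le> snd z \<and> fst z / u + snd z / v \<le> 1"
  using assms by (simp add: right_tri_def field_simps)

lemma right_tri_mono:
  assumes "0 < u" "0 < v" "u \<le> u'" "v \<le> v'"
  shows "right_tri u v \<subseteq> right_tri u' v'"
proof
  fix z assume "z \<in> right_tri u v"
  then have "0 \<le> fst z" "0 \<le> snd z" "fst z / u + snd z / v \<le> 1"
    using assms(1,2) by (simp_all add: mem_right_tri_iff)
  moreover have "fst z / u' \<le> fst z / u" "snd z / v' \<le> snd z / v"
    using assms \<open>0 \<le> fst z\<close> \<open>0 \<le> snd z\<close> by (simp_all add: frac_le)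
  ultimately show "z \<in> right_tri u' v'"
    using assms by (simp add: mem_right_tri_iff)
qed

lemma right_tri_affine_cut:
  fixes g0 g1 g2 :: real
  assumes "0 < g0" "g1 \<le> 0" "g2 \<le> 0"
  defines "u \<equiv> g0 / (g0 - g1)" and "v \<equiv> g0 / (g0 - g2)"
  shows "0 < u" "u \<le> 1" "0 < v" "v \<le> 1"
    and "z \<in> right_tri 1 1 \<Longrightarrow> 0 \<le> (1 - fst z - snd z) * g0 + fst z * g1 + snd z * g2 \<longleftrightarrow> z \<in> right_tri u v"
proof -
  show u: "0 < u" "u \<le> 1" and v: "0 < v" "v \<le> 1"
    using assms(1-3) by (simp_all add: u_def v_def)
  assume "z \<in> right_tri 1 1"
  then have "0 \<le> fst z" "0 \<le> snd z"
    by (simp_all add: right_tri_def)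
  have "fst z / u + snd z / v = (fst z * (g0 - g1) + snd z * (g0 - g2)) / g0"
    using assms(1-3) by (simp add: u_def v_def add_divide_distrib)
  then have "z \<in> right_tri u v \<longleftrightarrow> fst z * (g0 - g1) + snd z * (g0 - g2) \<le> g0"
    using u v \<open>0 \<le> fst z\<close> \<open>0 \<le> snd z\<close> \<open>0 < g0\<close> by (simp add: mem_right_tri_iff)
  then show "0 \<le> (1 - fst z - snd z) * g0 + fst z * g1 + snd z * g2 \<longleftrightarrow> z \<in> right_tri u v"
    by (simp add: algebra_simps)
qed

lemma nn_integral_indicator_Diff:
  fixes f :: "'a \<Rightarrow> ennreal"
  assumes "R \<subseteq> D" "R \<in> sets M" "D \<in> sets M" "f \<in> borel_measurable M"
    and D: "(\<integral>\<^sup>+x. indicator D x * f x \<partial>M) = ennreal A" "0 \<le> A"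
    and R: "(\<integral>\<^sup>+x. indicator R x * f x \<partial>M) = ennreal B" "0 \<le> B"
  shows "(\<integral>\<^sup>+x. indicator (D - R) x * f x \<partial>M) = ennreal (A - B)" and "B \<le> A"
proof -
  have "ennreal A = (\<integral>\<^sup>+x. indicator R x * f x + indicator (D - R) x * f x \<partial>M)"
    unfolding D(1)[symmetric] using \<open>R \<subseteq> D\<close> by (intro nn_integral_cong) (auto simp: indicator_def)
  also have "\<dots> = ennreal B + (\<integral>\<^sup>+x. indicator (D - R) x * f x \<partial>M)"
    using assms(2-4) by (subst nn_integral_add) (auto simp: R)
  finally have sum: "ennreal A = ennreal B + (\<integral>\<^sup>+x. indicator (D - R) x * f x \<partial>M)" .
  then show "(\<integral>\<^sup>+x. indicator (D - R) x * f x \<partial>M) = ennreal (A - B)"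
    using \<open>0 \<le> B\<close> by (simp add: ennreal_minus[symmetric])
  have "ennreal B \<le> ennreal A"
    unfolding sum by simp
  then show "B \<le> A"
    using \<open>0 \<le> A\<close> by simp
qed

lemma set_integral_eq_nn_integral_real:
  fixes f :: "'a \<Rightarrow> real"
  assumes "set_integrable M S f" "\<And>x. x \<in> S \<Longrightarrow> 0 \<le> f x"
    and "(\<integral>\<^sup>+x. indicator S x * ennreal (f x) \<partial>M) = ennreal c" "0 \<le> c"
  shows "(LINT x:S|M. f x) = c"
proof -
  have "integrable M (\<lambda>x. indicator S x * f x)"
    using assms(1) by (simp add: set_integrable_def)
  then have "(\<integral>\<^sup>+x. ennreal (indicator S x * f x) \<partial>M) = ennreal (\<integral>x. indicator S x * f x \<partial>M)"
    using assms(2) by (intro nn_integral_eq_integral) (auto simp: indicator_def)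
  also have "(\<integral>x. indicator S x * f x \<partial>M) = (LINT x:S|M. f x)"
    by (simp add: set_lebesgue_integral_def)
  finally have "(\<integral>\<^sup>+x. ennreal (indicator S x * f x) \<partial>M) = ennreal (LINT x:S|M. f x)" .
  moreover have "(\<integral>\<^sup>+x. ennreal (indicator S x * f x) \<partial>M) = (\<integral>\<^sup>+x. indicator S x * ennreal (f x) \<partial>M)"
    by (intro nn_integral_cong) (simp add: indicator_def)
  moreover have "0 \<le> (LINT x:S|M. f x)"
    unfolding set_lebesgue_integral_def using assms(2) by (intro Bochner_Integration.integral_nonneg) (auto simp: indicator_def)
  ultimately show ?thesis
    using assms(3,4) by simp
qed

section \<open>The two-point problem in chart coordinates\<close>

definition qform :: "real \<times> real \<Rightarrow> real" where
  "qform z = (fst z)^2 - fst z * snd z + (snd z)^2"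

lemma qform_sum_squares: "qform z = (fst z - snd z / 2)^2 + 3/4 * (snd z)^2"
  by (simp add: qform_def power2_eq_square algebra_simps)

lemma qform_nonneg: "0 \<le> qform z"
  unfolding qform_sum_squares by simp

lemma qform_eq_0_iff: "qform z = 0 \<longleftrightarrow> z = 0"
proof
  assume "qform z = 0"
  moreover have "0 \<le> (fst z - snd z / 2)^2" "0 \<le> 3/4 * (snd z)^2"
    by simp_all
  ultimately have "(fst z - snd z / 2)^2 = 0" "3/4 * (snd z)^2 = 0"
    unfolding qform_sum_squares by linarith+
  then show "z = 0"
    by (simp add: prod_eq_iff)
qed (simp add: qform_def)

definition gram :: "real \<times> real \<Rightarrow> real \<times> real" where
  "gram z = (fst z + snd z / 2, fst z / 2 + snd z)"

lemma gram_inj: "gram z = gram w \<Longrightarrow> z = w"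
  by (auto simp: gram_def prod_eq_iff)

definition golden_inv :: real where
  "golden_inv = (sqrt 5 - 1) / 2"

lemma golden_eq: "golden = 1 + golden_inv"
  by (simp add: golden_def golden_inv_def field_simps)

lemma golden_inv_sq: "golden_inv^2 = 1 - golden_inv"
  unfolding golden_inv_def by (simp add: power2_eq_square field_simps)

lemma golden_inv_cube: "golden_inv^3 = 2 * golden_inv - 1"
proof -
  have "golden_inv^3 = golden_inv * golden_inv^2"
    by (simp add: power3_eq_cube power2_eq_square)
  then show ?thesis
    unfolding golden_inv_sq by (simp add: algebra_simps golden_inv_sq[unfolded power2_eq_square])
qed

lemma golden_inv_bounds: "0.618 < golden_inv" "golden_inv < 0.6181"
proof -
  have "sqrt (2.236^2) < sqrt 5" "sqrt 5 < sqrt (2.2361^2)"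
    by (simp_all only: real_sqrt_less_iff) (simp_all add: power2_eq_square)
  then show "0.618 < golden_inv" "golden_inv < 0.6181"
    by (simp_all add: golden_inv_def)
qed

lemma concave_quadratic_nonneg_between:
  fixes h :: "real \<Rightarrow> real"
  assumes h: "\<And>t. h t = c0 + c1 * t - q * t^2" and "0 \<le> q"
    and p: "p1 \<le> p" "p \<le> p2" "p1 < p2" and h1: "0 \<le> h p1" and h2: "0 < h p2"
  shows "0 \<le> h p" and "h p = 0 \<Longrightarrow> p = p1 \<and> h p1 = 0"
proof -
  have interpolation: "(p2 - p1) * h p = (p2 - p) * h p1 + (p - p1) * h p2 + q * (p - p1) * (p2 - p) * (p2 - p1)"
    by (simp add: h power2_eq_square algebra_simps)
  have "0 \<le> (p2 - p) * h p1" "0 \<le> (p - p1) * h p2" "0 \<le> q * (p - p1) * (p2 - p) * (p2 - p1)"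
    using \<open>0 \<le> q\<close> p h1 h2 by simp_all
  then have "0 \<le> (p2 - p1) * h p"
    unfolding interpolation by linarith
  then show "0 \<le> h p"
    using p by (simp add: zero_le_mult_iff)
  assume "h p = 0"
  then have "(p2 - p) * h p1 + (p - p1) * h p2 + q * (p - p1) * (p2 - p) * (p2 - p1) = 0"
    using interpolation by simp
  then have "(p2 - p) * h p1 = 0" "(p - p1) * h p2 = 0"
    using \<open>0 \<le> (p2 - p) * h p1\<close> \<open>0 \<le> (p - p1) * h p2\<close>
      \<open>0 \<le> q * (p - p1) * (p2 - p) * (p2 - p1)\<close> by linarith+
  then show "p = p1 \<and> h p1 = 0"
    using h2 p by auto
qed

definition split_gain :: "real \<Rightarrow> real \<Rightarrow> real" where
  "split_gain u v = (u * v * (u + v)^2 - 3 * (u * v) * (u + v) + 3 - (u * v)^2) / (1 - u * v)"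

definition max_gain :: real where
  "max_gain = 15 * golden_inv - 6"

lemma max_gain_factorization:
  "max_gain * (1 - r^2) - 3 * r^4 + 6 * r^3 - 3 = 3 * (1 - r) * (r - golden_inv)^2 * (r - 1 + 2 * golden_inv)"
proof -
  have "3 * (1 - r) * (r - golden_inv)^2 * (r - 1 + 2 * golden_inv) =
     3 * (1 - r) * (r^3 - r^2 + (2 * golden_inv - 3 * golden_inv^2) * r + (2 * golden_inv^3 - golden_inv^2))"
    by (simp add: power2_eq_square power3_eq_cube algebra_simps)
  also have "\<dots> = 3 * (1 - r) * (r^3 - r^2 + (5 * golden_inv - 3) * r + (5 * golden_inv - 3))"
    unfolding golden_inv_sq golden_inv_cube by (simp add: algebra_simps)
  also have "\<dots> = max_gain * (1 - r^2) - 3 * r^4 + 6 * r^3 - 3"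
    by (simp add: max_gain_def power2_eq_square power3_eq_cube power4_eq_xxxx algebra_simps)
  finally show ?thesis ..
qed

text \<open>With q = uv fixed, the gap to the maximal gain is a concave quadratic in p = u + v,
  which ranges over [2 sqrt q, 1 + q].\<close>

lemma split_gain_le_max_gain:
  assumes u: "0 < u" "u \<le> 1" and v: "0 < v" "v \<le> 1" and "u * v < 1"
  shows "split_gain u v \<le> max_gain" and "split_gain u v = max_gain \<Longrightarrow> u = golden_inv \<and> v = golden_inv"
proof -
  define q where "q = u * v"
  define r where "r = sqrt q"
  have q: "0 < q" "q < 1" using u v \<open>u * v < 1\<close> by (auto simp: q_def)
  have r: "0 < r" "r < 1" "r^2 = q" using q by (auto simp: r_def)
  define h where "h t = (max_gain * (1 - q) - 3 + q^2) + 3 * q * t - q * t^2" for t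
  have gap: "max_gain - split_gain u v = h (u + v) / (1 - q)"
    using q by (simp add: split_gain_def h_def q_def field_simps)
  have p1: "2 * r \<le> u + v"
    using arith_geo_mean_sqrt[of u v] u v by (simp add: r_def q_def)
  have p2: "u + v \<le> 1 + q"
    using mult_nonneg_nonneg[of "1 - u" "1 - v"] u v by (simp add: q_def algebra_simps)
  have p12: "2 * r < 1 + q"
  proof -
    have "0 < (1 - r)^2" using r by simp
    then show ?thesis using r(3) by (simp add: power2_eq_square algebra_simps)
  qed
  have h_2r: "h (2 * r) = 3 * (1 - r) * (r - golden_inv)^2 * (r - 1 + 2 * golden_inv)"
    unfolding h_def r(3)[symmetric] max_gain_factorization[symmetric]
    by (simp add: power2_eq_square power3_eq_cube power4_eq_xxxx algebra_simps)
  have "0 < r - 1 + 2 * golden_inv"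
    using r golden_inv_bounds by simp
  then have h1: "0 \<le> h (2 * r)"
    using r h_2r by simp
  have h2: "0 < h (1 + q)"
  proof -
    have "h (1 + q) = (1 - q) * (max_gain - 3 + (q - 1/2)^2 - 1/4)"
      by (simp add: h_def power2_eq_square algebra_simps)
    moreover have "0 < max_gain - 3 + (q - 1/2)^2 - 1/4"
      using golden_inv_bounds zero_le_power2[of "q - 1/2"] by (simp add: max_gain_def; linarith)
    ultimately show ?thesis
      using q by simp
  qed
  have "h t = (max_gain * (1 - q) - 3 + q^2) + 3 * q * t - q * t^2" for t
    by (simp add: h_def)
  note concave = concave_quadratic_nonneg_between[of h, OF this _ p1 p2 p12 h1 h2]
  have "0 \<le> h (u + v) / (1 - q)"
    using concave(1) q by auto
  then show "split_gain u v \<le> max_gain"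
    using gap by simp
  assume "split_gain u v = max_gain"
  then have "h (u + v) = 0"
    using gap q by simp
  then have "u + v = 2 * r" "h (2 * r) = 0"
    using concave(2) q by auto
  then have "(r - golden_inv)^2 = 0"
    using r \<open>0 < r - 1 + 2 * golden_inv\<close> unfolding h_2r by simp
  then have "r = golden_inv"
    by simp
  have "(u - v)^2 = (u + v)^2 - 4 * q"
    by (simp add: q_def power2_eq_square algebra_simps)
  then have "u = v"
    using \<open>u + v = 2 * r\<close> r by (simp add: power2_eq_square)
  moreover have "u^2 = golden_inv^2"
    using \<open>u = v\<close> \<open>r = golden_inv\<close> r(3) by (simp add: q_def power2_eq_square)
  ultimately show "u = golden_inv \<and> v = golden_inv"
    using u golden_inv_bounds by (simp add: power2_eq_iff)
qed

text \<open>Read through the chart of the locale below: sq_moment u v A is the integral over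
  z \<in> right_tri u v of the squared distance from chart z to the point with coordinates A, and
  split_distortion u v A B is the distortion of a pair whose first point has the image of
  right_tri u v as its Voronoi cell. The two centroids are those of right_tri u v and of
  right_tri 1 1 - right_tri u v.\<close>

definition sq_moment :: "real \<Rightarrow> real \<Rightarrow> real \<times> real \<Rightarrow> real" where
  "sq_moment u v A = u * v * (2/3 * qform A - fst A * u / 3 - snd A * v / 3 + u^2/12 + u * v/24 + v^2/12)"

definition split_distortion :: "real \<Rightarrow> real \<Rightarrow> real \<times> real \<Rightarrow> real \<times> real \<Rightarrow> real" where
  "split_distortion u v A B = 2 * (sq_moment u v A + sq_moment 1 1 B - sq_moment u v B)"

definition corner_centroid :: "real \<Rightarrow> real \<Rightarrow> real \<times> real" where
  "corner_centroid u v = (u / 3, v / 3)"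

definition complement_centroid :: "real \<Rightarrow> real \<Rightarrow> real \<times> real" where
  "complement_centroid u v = ((1 - u^2 * v) / (3 * (1 - u * v)), (1 - u * v^2) / (3 * (1 - u * v)))"

lemma qform_diff:
  "qform (x - y) = qform x - (2 * fst y - snd y) * fst x - (2 * snd y - fst y) * snd x + qform y"
  by (simp add: qform_def power2_eq_square algebra_simps)

lemma gram_dual: "2 * fst (gram z) - snd (gram z) = 3/2 * fst z" "2 * snd (gram z) - fst (gram z) = 3/2 * snd z"
  by (simp_all add: gram_def)

lemma qform_gram: "4/3 * qform (gram z) = (fst z)^2 + fst z * snd z + (snd z)^2"
  by (simp add: qform_def gram_def power2_eq_square algebra_simps)

lemma sq_moment_parallel_axis:
  "sq_moment u v A = 2/3 * (u * v) * qform (A - gram (corner_centroid u v))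
     + u * v * ((u^2 + v^2) / 36 - u * v / 72)"
  unfolding qform_diff sq_moment_def
  by (simp add: gram_def corner_centroid_def qform_def power2_eq_square field_simps)

lemma complement_centroid_scaled:
  assumes "u * v \<noteq> 1"
  shows "(1 - u * v) * fst (complement_centroid u v) = (1 - u^2 * v) / 3"
    and "(1 - u * v) * snd (complement_centroid u v) = (1 - u * v^2) / 3"
proof -
  define w where "w = 1 - u * v"
  have "w \<noteq> 0" using assms by (simp add: w_def)
  moreover have "complement_centroid u v = ((1 - u^2 * v) / (3 * w), (1 - u * v^2) / (3 * w))"
    by (simp add: complement_centroid_def w_def)
  ultimately show "(1 - u * v) * fst (complement_centroid u v) = (1 - u^2 * v) / 3"
    and "(1 - u * v) * snd (complement_centroid u v) = (1 - u * v^2) / 3"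
    unfolding w_def[symmetric] by simp_all
qed

lemma complement_moment_parallel_axis:
  assumes "u * v \<noteq> 1"
  shows "sq_moment 1 1 B - sq_moment u v B = 2/3 * (1 - u * v) * qform (B - gram (complement_centroid u v))
     + 5/24 - u * v * (u^2 / 12 + u * v / 24 + v^2 / 12)
     - 2/3 * (1 - u * v) * qform (gram (complement_centroid u v))"
proof -
  define g where "g = gram (complement_centroid u v)"
  have coeffs: "(1 - u * v) * (2 * fst g - snd g) = (1 - u^2 * v) / 2"
    "(1 - u * v) * (2 * snd g - fst g) = (1 - u * v^2) / 2"
    unfolding g_def gram_dual mult.left_commute[of "1 - u * v"] complement_centroid_scaled[OF assms] by simp_all
  have "2/3 * (1 - u * v) * qform (B - g) = 2/3 * (1 - u * v) * qform B
      - 2/3 * ((1 - u * v) * (2 * fst g - snd g)) * fst B - 2/3 * ((1 - u * v) * (2 * snd g - fst g)) * snd B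
      + 2/3 * (1 - u * v) * qform g"
    unfolding qform_diff by (simp add: field_simps)
  also have "\<dots> = 2/3 * (1 - u * v) * qform B - (1 - u^2 * v) / 3 * fst B - (1 - u * v^2) / 3 * snd B
      + 2/3 * (1 - u * v) * qform g"
    unfolding coeffs by (simp add: field_simps)
  finally show ?thesis
    unfolding sq_moment_def g_def[symmetric] by (simp add: power2_eq_square field_simps)
qed

lemma split_gain_eq:
  assumes "u * v \<noteq> 1"
  shows "split_gain u v = 9 * (1 - u * v) * (4/3 * qform (gram (complement_centroid u v)))
     + u * v * (u^2 + u * v + v^2)"
proof -
  define w where "w = 1 - u * v"
  define X where "X = 1 - u^2 * v"
  define Y where "Y = 1 - u * v^2"
  have w: "w \<noteq> 0" using assms by (simp add: w_def)
  have "complement_centroid u v = (X / (3 * w), Y / (3 * w))"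
    by (simp add: complement_centroid_def X_def Y_def w_def)
  then have Q: "9 * w * (4/3 * qform (gram (complement_centroid u v))) = (X^2 + X * Y + Y^2) / w"
    unfolding qform_gram using w by (simp add: field_simps power2_eq_square)
  have "X^2 + X * Y + Y^2 + u * v * (u^2 + u * v + v^2) * w
      = u * v * (u + v)^2 - 3 * (u * v) * (u + v) + 3 - (u * v)^2"
    by (simp add: X_def Y_def w_def power2_eq_square algebra_simps)
  then have "split_gain u v = (X^2 + X * Y + Y^2 + u * v * (u^2 + u * v + v^2) * w) / w"
    by (simp add: split_gain_def w_def)
  also have "\<dots> = (X^2 + X * Y + Y^2) / w + u * v * (u^2 + u * v + v^2)"
    using w by (simp add: add_divide_distrib)
  finally show ?thesis
    unfolding Q[unfolded w_def] by (simp add: w_def)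
qed

lemma split_distortion_decomposition:
  assumes "u * v \<noteq> 1"
  shows "split_distortion u v A B = 5/12 - split_gain u v / 9
      + 4/3 * (u * v) * qform (A - gram (corner_centroid u v))
      + 4/3 * (1 - u * v) * qform (B - gram (complement_centroid u v))"
proof -
  have "split_distortion u v A B = 2 * sq_moment u v A + 2 * (sq_moment 1 1 B - sq_moment u v B)"
    by (simp add: split_distortion_def)
  also have "\<dots> = 5/12 - split_gain u v / 9
      + 4/3 * (u * v) * qform (A - gram (corner_centroid u v))
      + 4/3 * (1 - u * v) * qform (B - gram (complement_centroid u v))"
    unfolding sq_moment_parallel_axis[of u v A] complement_moment_parallel_axis[OF assms] split_gain_eq[OF assms]
    by (simp add: power2_eq_square field_simps)
  finally show ?thesis .
qed

definition V2 :: real where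
  "V2 = 5/12 - max_gain / 9"

lemma V2_eq: "V2 = (23 - 10 * sqrt 5) / 12"
  by (simp add: V2_def max_gain_def golden_inv_def field_simps)

lemma V2_less: "V2 < 1/12"
  using golden_inv_bounds by (simp add: V2_def max_gain_def)

lemma V2_bounds: "0.05327665 \<le> V2" "V2 < 0.05327675"
proof -
  have "sqrt 5 \<le> sqrt (2.23606802^2)" "sqrt (2.2360679^2) < sqrt 5"
    by (simp_all only: real_sqrt_le_iff real_sqrt_less_iff) (simp_all add: power2_eq_square)
  then show "0.05327665 \<le> V2" "V2 < 0.05327675"
    unfolding V2_eq by simp_all
qed

lemma split_distortion_unit: "split_distortion 1 1 A B = 1/12 + 4/3 * qform (A - (1/2, 1/2))"
  unfolding split_distortion_def sq_moment_parallel_axis[of 1 1 A]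
  by (simp add: gram_def corner_centroid_def)

lemma split_gain_golden: "split_gain golden_inv golden_inv = max_gain"
proof -
  have "golden_inv^4 = (1 - golden_inv)^2"
    unfolding golden_inv_sq[symmetric] by simp
  also have "\<dots> = 2 - 3 * golden_inv"
    using golden_inv_sq by (simp add: power2_diff)
  finally have "golden_inv^4 = 2 - 3 * golden_inv" .
  moreover have "1 - golden_inv^2 = golden_inv"
    using golden_inv_sq by simp
  moreover have "split_gain golden_inv golden_inv = (3 * golden_inv^4 - 6 * golden_inv^3 + 3) / (1 - golden_inv^2)"
    by (simp add: split_gain_def power2_eq_square power3_eq_cube power4_eq_xxxx algebra_simps)
  ultimately have "split_gain golden_inv golden_inv = (15 - 21 * golden_inv) / golden_inv"
    unfolding golden_inv_cube by simp
  also have "15 - 21 * golden_inv = max_gain * golden_inv"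
    using golden_inv_sq by (simp add: max_gain_def power2_eq_square algebra_simps)
  finally show ?thesis
    using golden_inv_bounds by simp
qed

lemma complement_centroid_golden:
  "complement_centroid golden_inv golden_inv = (2 * golden_inv / 3, 2 * golden_inv / 3)"
proof -
  have "1 - golden_inv^2 * golden_inv = 2 * golden_inv^2" "1 - golden_inv * golden_inv^2 = 2 * golden_inv^2"
    "1 - golden_inv * golden_inv = golden_inv"
    using golden_inv_sq golden_inv_cube by (simp_all add: power3_eq_cube power2_eq_square algebra_simps)
  then have "complement_centroid golden_inv golden_inv
      = (2 * golden_inv^2 / (3 * golden_inv), 2 * golden_inv^2 / (3 * golden_inv))"
    unfolding complement_centroid_def by simp
  also have "2 * golden_inv^2 / (3 * golden_inv) = 2 * golden_inv / 3"
    using golden_inv_bounds by (simp add: power2_eq_square)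
  finally show ?thesis .
qed

lemma split_distortion_unit_gt_V2: "V2 < split_distortion 1 1 A B"
  using V2_less qform_nonneg[of "A - (1/2, 1/2)"] by (simp add: split_distortion_unit)

lemma split_distortion_ge_V2_interior:
  assumes u: "0 < u" "u \<le> 1" and v: "0 < v" "v \<le> 1" and "u * v < 1"
  shows "V2 \<le> split_distortion u v A B"
    and "split_distortion u v A B = V2 \<Longrightarrow> u = golden_inv \<and> v = golden_inv
      \<and> A = gram (corner_centroid golden_inv golden_inv) \<and> B = gram (complement_centroid golden_inv golden_inv)"
proof -
  define QA where "QA = 4/3 * (u * v) * qform (A - gram (corner_centroid u v))"
  define QB where "QB = 4/3 * (1 - u * v) * qform (B - gram (complement_centroid u v))"
  have "0 \<le> QA" "0 \<le> QB"
    using u v \<open>u * v < 1\<close> qform_nonneg by (simp_all add: QA_def QB_def)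
  have "0 \<le> (max_gain - split_gain u v) / 9"
    using split_gain_le_max_gain(1)[OF assms] by simp
  have distortion: "split_distortion u v A B = V2 + (max_gain - split_gain u v) / 9 + QA + QB"
    using \<open>u * v < 1\<close> by (simp add: split_distortion_decomposition QA_def QB_def V2_def diff_divide_distrib)
  then show "V2 \<le> split_distortion u v A B"
    using \<open>0 \<le> QA\<close> \<open>0 \<le> QB\<close> \<open>0 \<le> (max_gain - split_gain u v) / 9\<close> by linarith
  assume "split_distortion u v A B = V2"
  then have "(max_gain - split_gain u v) / 9 = 0" "QA = 0" "QB = 0"
    using distortion \<open>0 \<le> QA\<close> \<open>0 \<le> QB\<close> \<open>0 \<le> (max_gain - split_gain u v) / 9\<close> by linarith+
  then have "u = golden_inv \<and> v = golden_inv"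
    "qform (A - gram (corner_centroid u v)) = 0" "qform (B - gram (complement_centroid u v)) = 0"
    using split_gain_le_max_gain(2)[OF assms] u v \<open>u * v < 1\<close> by (simp_all add: QA_def QB_def)
  then show "u = golden_inv \<and> v = golden_inv
      \<and> A = gram (corner_centroid golden_inv golden_inv) \<and> B = gram (complement_centroid golden_inv golden_inv)"
    by (simp add: qform_eq_0_iff)
qed

lemma unit_interval_mult_eq_1:
  fixes u v :: real
  assumes "0 < u" "u \<le> 1" "0 < v" "v \<le> 1" "u * v = 1"
  shows "u = 1" "v = 1"
proof -
  have "u * v \<le> u" "u * v \<le> v"
    using assms(1-4) by (simp_all add: mult_left_le mult_left_le_one_le)
  then show "u = 1" "v = 1"
    using assms by linarith+
qed

lemma split_distortion_ge_V2:
  assumes u: "0 < u" "u \<le> 1" and v: "0 < v" "v \<le> 1"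
  shows "V2 \<le> split_distortion u v A B" (is ?ge)
    and "split_distortion u v A B = V2 \<Longrightarrow> u = golden_inv \<and> v = golden_inv
      \<and> A = gram (corner_centroid golden_inv golden_inv) \<and> B = gram (complement_centroid golden_inv golden_inv)"
    (is "?eq \<Longrightarrow> ?optimum")
proof -
  have "u * v \<le> 1"
    using u v by (simp add: mult_le_one)
  then consider "u * v < 1" | "u = 1" "v = 1"
    using unit_interval_mult_eq_1[OF u v] by fastforce
  then have "?ge \<and> (?eq \<longrightarrow> ?optimum)"
  proof cases
    case 1
    then show ?thesis
      using split_distortion_ge_V2_interior[OF u v 1] by blast
  next
    case 2
    then show ?thesis
      using split_distortion_unit_gt_V2[of A B] by simp
  qed
  then show ?ge and "?eq \<Longrightarrow> ?optimum"
    by blast+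
qed

lemma split_distortion_golden:
  "split_distortion golden_inv golden_inv (gram (corner_centroid golden_inv golden_inv))
     (gram (complement_centroid golden_inv golden_inv)) = V2"
proof -
  have "golden_inv * golden_inv \<noteq> 1"
    using golden_inv_sq golden_inv_bounds by (simp add: power2_eq_square)
  then show ?thesis
    by (simp add: split_distortion_decomposition split_gain_golden V2_def qform_def)
qed

section \<open>The triangle seen from one vertex\<close>

definition dist_gap :: "real \<times> real \<Rightarrow> real \<times> real \<Rightarrow> real \<times> real \<Rightarrow> real" where
  "dist_gap a b x = (dist x b)^2 - (dist x a)^2"

lemma compact_tri: "compact tri"
  unfolding tri_def by (intro compact_convex_hull finite_imp_compact) simp

lemma tri_sets [measurable]: "tri \<in> sets borel"
  using compact_tri by (intro borel_closed compact_imp_closed)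

lemma set_integrable_tri:
  fixes f :: "real \<times> real \<Rightarrow> 'a::{banach, second_countable_topology}"
  assumes "continuous_on tri f"
  shows "set_integrable lborel tri f"
  unfolding set_integrable_def using compact_tri assms by (rule borel_integrable_compact)

lemma tri_nonneg: "x \<in> tri \<Longrightarrow> 0 \<le> fst x \<and> 0 \<le> snd x"
  unfolding tri_def convex_hull_3 by auto

locale equilateral_frame =
  fixes P0 P1 P2 :: "real \<times> real"
  assumes tri_eq: "tri = convex hull {P0, P1, P2}"
    and norm_edges: "norm (P1 - P0) = 1" "norm (P2 - P0) = 1"
    and inner_edges: "(P1 - P0) \<bullet> (P2 - P0) = 1/2"
begin

definition chart :: "real \<times> real \<Rightarrow> real \<times> real" where
  "chart z = P0 + fst z *\<^sub>R (P1 - P0) + snd z *\<^sub>R (P2 - P0)"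

definition coords :: "real \<times> real \<Rightarrow> real \<times> real" where
  "coords a = ((a - P0) \<bullet> (P1 - P0), (a - P0) \<bullet> (P2 - P0))"

lemma inner_edges_self:
  "(P1 - P0) \<bullet> (P1 - P0) = 1" "(P2 - P0) \<bullet> (P2 - P0) = 1" "(P2 - P0) \<bullet> (P1 - P0) = 1/2"
  using norm_edges inner_edges by (simp_all add: power2_norm_eq_inner[symmetric] inner_commute)

lemma coords_chart: "coords (chart z) = gram z"
  by (simp add: coords_def chart_def gram_def inner_add_left inner_edges_self inner_edges)

lemma dist_chart_sq:
  "(dist (chart z) a)^2 = (fst z)^2 + fst z * snd z + (snd z)^2
     - 2 * fst z * fst (coords a) - 2 * snd z * snd (coords a) + (dist a P0)^2"
proof -
  define e1 e2 c where "e1 = P1 - P0" and "e2 = P2 - P0" and "c = a - P0"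
  have "(dist (chart z) a)^2 = (norm (fst z *\<^sub>R e1 + snd z *\<^sub>R e2 - c))^2"
    by (simp add: dist_norm chart_def e1_def e2_def c_def algebra_simps)
  also have "\<dots> = (fst z)^2 * (e1 \<bullet> e1) + 2 * fst z * snd z * (e2 \<bullet> e1) + (snd z)^2 * (e2 \<bullet> e2)
      - 2 * fst z * (c \<bullet> e1) - 2 * snd z * (c \<bullet> e2) + c \<bullet> c"
    unfolding power2_norm_eq_inner by (simp add: inner_add_left inner_add_right inner_diff_left inner_diff_right
        inner_commute power2_eq_square algebra_simps)
  finally show ?thesis
    using inner_edges_self
    by (simp add: e1_def e2_def c_def coords_def dist_norm power2_norm_eq_inner)
qed

lemma det_edges_sq: "(fst (P1 - P0) * snd (P2 - P0) - fst (P2 - P0) * snd (P1 - P0))^2 = 3/4"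
proof -
  define e1 e2 where "e1 = P1 - P0" and "e2 = P2 - P0"
  have "(fst e1 * snd e2 - fst e2 * snd e1)^2 = (e1 \<bullet> e1) * (e2 \<bullet> e2) - (e2 \<bullet> e1)^2"
    by (simp add: inner_prod_def power2_eq_square algebra_simps)
  then show ?thesis
    using inner_edges_self by (simp add: e1_def e2_def power2_eq_square)
qed

lemma norm_sq_qform: "(norm w)^2 = 4/3 * qform (w \<bullet> (P1 - P0), w \<bullet> (P2 - P0))"
proof -
  define e1 e2 where "e1 = P1 - P0" and "e2 = P2 - P0"
  have "(fst e1 * snd e2 - fst e2 * snd e1)^2 * (norm w)^2
      = (e2 \<bullet> e2) * (w \<bullet> e1)^2 - 2 * (e2 \<bullet> e1) * (w \<bullet> e1) * (w \<bullet> e2) + (e1 \<bullet> e1) * (w \<bullet> e2)^2"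
    unfolding power2_norm_eq_inner by (simp add: inner_prod_def power2_eq_square algebra_simps)
  moreover have "(fst e1 * snd e2 - fst e2 * snd e1)^2 = 3/4" "e1 \<bullet> e1 = 1" "e2 \<bullet> e2 = 1" "e2 \<bullet> e1 = 1/2"
    using det_edges_sq inner_edges_self by (simp_all add: e1_def e2_def)
  ultimately have "3/4 * (norm w)^2 = qform (w \<bullet> e1, w \<bullet> e2)"
    by (simp add: qform_def)
  then show ?thesis
    by (simp add: e1_def e2_def)
qed

lemma dist_P0_sq: "(dist a P0)^2 = 4/3 * qform (coords a)"
  by (simp add: dist_norm norm_sq_qform coords_def)

lemma coords_inj: "coords a = coords b \<Longrightarrow> a = b"
  using norm_sq_qform[of "a - b"] by (simp add: coords_def inner_diff_left qform_def)

lemma chart_inj: "chart z = chart w \<Longrightarrow> z = w"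
  using coords_chart gram_inj by metis

lemma chart_convex_combination: "chart z = (1 - fst z - snd z) *\<^sub>R P0 + fst z *\<^sub>R P1 + snd z *\<^sub>R P2"
  by (simp add: chart_def algebra_simps)

lemma chart_vertices: "chart (0, 0) = P0" "chart (1, 0) = P1" "chart (0, 1) = P2"
  by (simp_all add: chart_def)

lemma chart_measurable [measurable]: "chart \<in> borel_measurable borel"
  unfolding chart_def by (intro borel_measurable_continuous_onI continuous_intros)

lemma inj_chart: "inj chart"
  using chart_inj by (rule injI)

lemma tri_eq_chart_image: "tri = chart ` right_tri 1 1"
proof
  show "chart ` right_tri 1 1 \<subseteq> tri"
    unfolding tri_eq convex_hull_3 chart_convex_combination
    by (force simp: right_tri_def)
  show "tri \<subseteq> chart ` right_tri 1 1"
  proof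
    fix x assume "x \<in> tri"
    then obtain r s t where "0 \<le> r" "0 \<le> s" "0 \<le> t" "r + s + t = 1" "x = r *\<^sub>R P0 + s *\<^sub>R P1 + t *\<^sub>R P2"
      unfolding tri_eq convex_hull_3 by auto
    then have "x = chart (s, t)" "(s, t) \<in> right_tri 1 1"
      by (auto simp: chart_convex_combination right_tri_def)
    then show "x \<in> chart ` right_tri 1 1"
      by blast
  qed
qed

lemma chart_mem_tri_iff: "chart z \<in> tri \<longleftrightarrow> z \<in> right_tri 1 1"
  unfolding tri_eq_chart_image using inj_chart by (simp add: inj_image_mem_iff)

lemma nn_integral_chart:
  assumes "f \<in> borel_measurable borel"
  shows "(\<integral>\<^sup>+x. f x \<partial>lborel) = ennreal (sqrt 3 / 2) * (\<integral>\<^sup>+z. f (chart z) \<partial>lborel)"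
proof -
  define d where "d = fst (P1 - P0) * snd (P2 - P0) - fst (P2 - P0) * snd (P1 - P0)"
  have "\<bar>d\<bar> = sqrt (3/4)"
    using det_edges_sq unfolding d_def by (metis real_sqrt_abs)
  then have d: "\<bar>d\<bar> = sqrt 3 / 2" "d \<noteq> 0"
    by (auto simp: real_sqrt_divide)
  have "(\<integral>\<^sup>+x. f x \<partial>lborel) = ennreal \<bar>d\<bar> * (\<integral>\<^sup>+z. f (fst P0 + fst (P1 - P0) * fst z + fst (P2 - P0) * snd z,
      snd P0 + snd (P1 - P0) * fst z + snd (P2 - P0) * snd z) \<partial>lborel)"
    unfolding d_def by (rule nn_integral_lborel_affine[OF assms]) (use d in \<open>simp add: d_def\<close>)
  also have "(\<lambda>z. (fst P0 + fst (P1 - P0) * fst z + fst (P2 - P0) * snd z,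
      snd P0 + snd (P1 - P0) * fst z + snd (P2 - P0) * snd z)) = chart"
    by (auto simp: chart_def prod_eq_iff algebra_simps)
  finally show ?thesis
    using d(1) by simp
qed

lemma nn_integral_P_tri:
  assumes [measurable]: "f \<in> borel_measurable borel"
  shows "(\<integral>\<^sup>+x. f x \<partial>P_tri) = 2 * (\<integral>\<^sup>+z. indicator (right_tri 1 1) z * f (chart z) \<partial>lborel)"
proof -
  have "(\<integral>\<^sup>+x. f x \<partial>P_tri) = (\<integral>\<^sup>+x. ennreal (4 / sqrt 3) * (indicator tri x * f x) \<partial>lborel)"
    unfolding P_tri_def by (subst nn_integral_density) (auto simp: mult.assoc)
  also have "\<dots> = ennreal (4 / sqrt 3) * (\<integral>\<^sup>+x. indicator tri x * f x \<partial>lborel)"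
    by (rule nn_integral_cmult) measurable
  also have "(\<integral>\<^sup>+x. indicator tri x * f x \<partial>lborel)
      = ennreal (sqrt 3 / 2) * (\<integral>\<^sup>+z. indicator (right_tri 1 1) z * f (chart z) \<partial>lborel)"
    by (subst nn_integral_chart) (auto simp: indicator_def chart_mem_tri_iff)
  also have "ennreal (4 / sqrt 3) * (ennreal (sqrt 3 / 2) * X) = 2 * X" for X
    by (simp add: mult.assoc[symmetric] ennreal_mult'[symmetric])
  finally show ?thesis .
qed

lemma nn_integral_right_tri_dist_sq:
  assumes "0 < u" "0 < v"
  shows "(\<integral>\<^sup>+z. indicator (right_tri u v) z * ennreal ((dist (chart z) a)^2) \<partial>lborel)
      = ennreal (sq_moment u v (coords a))"
    and "0 \<le> sq_moment u v (coords a)"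
proof -
  have "(dist (chart (x, y)) a)^2 = (dist a P0)^2 + (-2 * fst (coords a)) * x + (-2 * snd (coords a)) * y
      + 1 * x^2 + 1 * x * y + 1 * y^2" for x y
    unfolding dist_chart_sq by simp
  note quadratic = nn_integral_quadratic_right_tri[OF assms _ this]
  have "u * v * ((dist a P0)^2/2 + -2 * fst (coords a) * u/6 + -2 * snd (coords a) * v/6
      + 1 * u^2/12 + 1 * u * v/24 + 1 * v^2/12) = sq_moment u v (coords a)"
    by (simp add: sq_moment_def dist_P0_sq algebra_simps)
  then show "(\<integral>\<^sup>+z. indicator (right_tri u v) z * ennreal ((dist (chart z) a)^2) \<partial>lborel)
      = ennreal (sq_moment u v (coords a))" and "0 \<le> sq_moment u v (coords a)"
    using quadratic by simp_all
qed

lemma dist_gap_chart_affine: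
  "dist_gap a b (chart z) = 4/3 * (qform (coords b) - qform (coords a))
     - 2 * fst z * (fst (coords b) - fst (coords a)) - 2 * snd z * (snd (coords b) - snd (coords a))"
  unfolding dist_gap_def dist_chart_sq dist_P0_sq by (simp add: algebra_simps)

lemma dist_gap_vertices:
  "dist_gap a b P0 = 4/3 * (qform (coords b) - qform (coords a))"
  "dist_gap a b P1 = dist_gap a b P0 - 2 * (fst (coords b) - fst (coords a))"
  "dist_gap a b P2 = dist_gap a b P0 - 2 * (snd (coords b) - snd (coords a))"
  using dist_gap_chart_affine[of a b "(0, 0)"] dist_gap_chart_affine[of a b "(1, 0)"]
    dist_gap_chart_affine[of a b "(0, 1)"] by (simp_all add: chart_vertices)

lemma dist_gap_chart:
  "dist_gap a b (chart z) = (1 - fst z - snd z) * dist_gap a b P0 + fst z * dist_gap a b P1 + snd z * dist_gap a b P2"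
  unfolding dist_gap_chart_affine dist_gap_vertices by (simp add: field_simps)

lemma distortion_pair:
  "distortion P_tri {a, b}
     = 2 * (\<integral>\<^sup>+z. indicator (right_tri 1 1) z * ennreal (min ((dist (chart z) a)^2) ((dist (chart z) b)^2)) \<partial>lborel)"
proof -
  have "(\<lambda>x. ennreal (min ((dist x a)^2) ((dist x b)^2))) \<in> borel_measurable borel"
    by (intro measurable_compose[OF _ measurable_ennreal] borel_measurable_continuous_onI continuous_intros)
  then show ?thesis
    unfolding distortion_def by (simp add: nn_integral_P_tri)
qed

lemma distortion_pair_same_side:
  assumes "0 \<le> dist_gap a b P0" "0 \<le> dist_gap a b P1" "0 \<le> dist_gap a b P2"
  shows "distortion P_tri {a, b} = ennreal (split_distortion 1 1 (coords a) (coords b))"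
proof -
  have "indicator (right_tri 1 1) z * ennreal (min ((dist (chart z) a)^2) ((dist (chart z) b)^2))
      = indicator (right_tri 1 1) z * ennreal ((dist (chart z) a)^2)" for z
  proof (cases "z \<in> right_tri 1 1")
    case True
    then have "0 \<le> dist_gap a b (chart z)"
      unfolding dist_gap_chart using assms by (auto simp: right_tri_def intro!: add_nonneg_nonneg)
    then show ?thesis
      by (simp add: dist_gap_def)
  qed simp
  moreover have "0 \<le> sq_moment 1 1 (coords a)"
    by (simp add: nn_integral_right_tri_dist_sq)
  ultimately show ?thesis
    by (simp add: distortion_pair nn_integral_right_tri_dist_sq numeral_mult_ennreal split_distortion_def)
qed

lemma distortion_pair_corner:
  assumes "0 < dist_gap a b P0" "dist_gap a b P1 \<le> 0" "dist_gap a b P2 \<le> 0"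
  defines "u \<equiv> dist_gap a b P0 / (dist_gap a b P0 - dist_gap a b P1)"
    and "v \<equiv> dist_gap a b P0 / (dist_gap a b P0 - dist_gap a b P2)"
  shows "0 < u" "u \<le> 1" "0 < v" "v \<le> 1"
    and "distortion P_tri {a, b} = ennreal (split_distortion u v (coords a) (coords b))"
proof -
  note cut = right_tri_affine_cut[OF assms(1-3), folded u_def v_def]
  show "0 < u" "u \<le> 1" "0 < v" "v \<le> 1"
    using cut(1-4) .
  define D R where "D = right_tri 1 1" and "R = right_tri u v"
  have "R \<subseteq> D"
    unfolding D_def R_def using cut(1-4) by (intro right_tri_mono) auto
  define da db where "da z = ennreal ((dist (chart z) a)^2)" and "db z = ennreal ((dist (chart z) b)^2)" for z
  have [measurable]: "da \<in> borel_measurable borel" "db \<in> borel_measurable borel"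
    unfolding da_def db_def by measurable
  have sets: "R \<in> sets lborel" "D \<in> sets lborel" "db \<in> borel_measurable lborel"
    unfolding R_def D_def by measurable
  have moment_a: "(\<integral>\<^sup>+z. indicator R z * da z \<partial>lborel) = ennreal (sq_moment u v (coords a))"
    "0 \<le> sq_moment u v (coords a)"
    unfolding R_def da_def using nn_integral_right_tri_dist_sq[OF cut(1,3)] by simp_all
  note moment_b = nn_integral_indicator_Diff[OF \<open>R \<subseteq> D\<close> sets
      nn_integral_right_tri_dist_sq[of 1 1 b, folded D_def db_def, simplified]
      nn_integral_right_tri_dist_sq[OF cut(1,3), of b, folded R_def db_def]]
  have side: "0 \<le> dist_gap a b (chart z) \<longleftrightarrow> z \<in> R" if "z \<in> D" for z
    using cut(5) that unfolding dist_gap_chart D_def R_def .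
  have "indicator D z * ennreal (min ((dist (chart z) a)^2) ((dist (chart z) b)^2))
      = indicator R z * da z + indicator (D - R) z * db z" for z
    using side[of z] \<open>R \<subseteq> D\<close>
    by (cases "z \<in> D"; cases "z \<in> R") (auto simp: da_def db_def dist_gap_def indicator_def min_def)
  then have "distortion P_tri {a, b} = 2 * (\<integral>\<^sup>+z. indicator R z * da z + indicator (D - R) z * db z \<partial>lborel)"
    unfolding distortion_pair D_def[symmetric] by simp
  also have "\<dots> = 2 * ((\<integral>\<^sup>+z. indicator R z * da z \<partial>lborel) + (\<integral>\<^sup>+z. indicator (D - R) z * db z \<partial>lborel))"
    unfolding D_def R_def by (subst nn_integral_add) measurable
  also have "\<dots> = 2 * ennreal (sq_moment u v (coords a) + (sq_moment 1 1 (coords b) - sq_moment u v (coords b)))"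
    unfolding moment_a(1) moment_b(1) using moment_a(2) moment_b(2) by (simp add: ennreal_plus)
  also have "\<dots> = ennreal (2 * (sq_moment u v (coords a) + (sq_moment 1 1 (coords b) - sq_moment u v (coords b))))"
    using moment_a(2) moment_b(2) by (intro numeral_mult_ennreal) simp
  also have "\<dots> = ennreal (split_distortion u v (coords a) (coords b))"
    by (simp add: split_distortion_def algebra_simps)
  finally show "distortion P_tri {a, b} = ennreal (split_distortion u v (coords a) (coords b))" .
qed

definition golden_pair :: "(real \<times> real) set" where
  "golden_pair = {chart (corner_centroid golden_inv golden_inv), chart (complement_centroid golden_inv golden_inv)}"

lemma golden_pair_admissible: "admissible 2 golden_pair"
proof -
  have "corner_centroid golden_inv golden_inv \<noteq> complement_centroid golden_inv golden_inv"
    using golden_inv_bounds by (simp add: corner_centroid_def complement_centroid_golden)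
  then show ?thesis
    using chart_inj by (auto simp: admissible_def golden_pair_def card_insert_if)
qed

lemma distortion_pair_ge_V2:
  assumes "0 < dist_gap a b P0" "dist_gap a b P1 \<le> 0" "dist_gap a b P2 \<le> 0"
  shows "\<exists>d. distortion P_tri {a, b} = ennreal d \<and> V2 \<le> d \<and> (d = V2 \<longrightarrow> {a, b} = golden_pair)"
proof -
  note corner = distortion_pair_corner[OF assms]
  note bound = split_distortion_ge_V2[OF corner(1-4), of "coords a" "coords b"]
  have "{a, b} = golden_pair"
    if "split_distortion (dist_gap a b P0 / (dist_gap a b P0 - dist_gap a b P1))
      (dist_gap a b P0 / (dist_gap a b P0 - dist_gap a b P2)) (coords a) (coords b) = V2"
    using bound(2)[OF that] coords_inj coords_chart unfolding golden_pair_def by metis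
  then show ?thesis
    using corner(5) bound(1) by blast
qed

lemma distortion_pair_same_side_gt_V2:
  assumes "0 \<le> dist_gap a b P0" "0 \<le> dist_gap a b P1" "0 \<le> dist_gap a b P2"
  shows "\<exists>d. distortion P_tri {a, b} = ennreal d \<and> V2 < d"
  using distortion_pair_same_side[OF assms] split_distortion_unit_gt_V2 by blast

lemma distortion_golden_pair: "distortion P_tri golden_pair = ennreal V2"
proof -
  define a b where "a = chart (corner_centroid golden_inv golden_inv)"
    and "b = chart (complement_centroid golden_inv golden_inv)"
  have coords: "coords a = (golden_inv / 2, golden_inv / 2)" "coords b = (golden_inv, golden_inv)"
    by (simp_all add: a_def b_def coords_chart gram_def corner_centroid_def complement_centroid_golden)
  have gaps: "dist_gap a b P0 = golden_inv^2" "dist_gap a b P1 = golden_inv^2 - golden_inv"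
    "dist_gap a b P2 = golden_inv^2 - golden_inv"
    by (simp_all add: dist_gap_vertices coords qform_def power2_eq_square)
  have "0 < dist_gap a b P0" "dist_gap a b P1 \<le> 0" "dist_gap a b P2 \<le> 0"
    unfolding gaps using golden_inv_sq golden_inv_bounds by simp_all
  moreover have "dist_gap a b P0 / (dist_gap a b P0 - dist_gap a b P1) = golden_inv"
    "dist_gap a b P0 / (dist_gap a b P0 - dist_gap a b P2) = golden_inv"
    unfolding gaps using golden_inv_bounds by (simp_all add: power2_eq_square)
  ultimately have "distortion P_tri {a, b} = ennreal (split_distortion golden_inv golden_inv (coords a) (coords b))"
    using distortion_pair_corner(5) by metis
  then show ?thesis
    by (simp add: a_def b_def golden_pair_def coords_chart split_distortion_golden)
qed

definition small_tri :: "real \<Rightarrow> (real \<times> real) set" where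
  "small_tri t = (\<lambda>x. P0 + t *\<^sub>R (x - P0)) ` tri"

lemma small_tri_eq:
  assumes "0 < t"
  shows "small_tri t = chart ` right_tri t t"
proof -
  have scale: "(\<lambda>z. t *\<^sub>R z) ` right_tri 1 1 = right_tri t t"
  proof (intro equalityI subsetI)
    fix z assume "z \<in> right_tri t t"
    then have "z = t *\<^sub>R ((1 / t) *\<^sub>R z)" "(1 / t) *\<^sub>R z \<in> right_tri 1 1"
      using assms by (simp_all add: mem_right_tri_iff)
    then show "z \<in> (\<lambda>z. t *\<^sub>R z) ` right_tri 1 1"
      by blast
  qed (use assms in \<open>auto simp: mem_right_tri_iff\<close>)
  have "P0 + t *\<^sub>R (chart z - P0) = chart (t *\<^sub>R z)" for z
    by (simp add: chart_def algebra_simps)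
  then have "small_tri t = (\<lambda>z. chart (t *\<^sub>R z)) ` right_tri 1 1"
    unfolding small_tri_def tri_eq_chart_image image_image by simp
  also have "\<dots> = chart ` right_tri t t"
    unfolding scale[symmetric] image_image ..
  finally show ?thesis .
qed

lemma small_tri_sets [measurable]: "small_tri t \<in> sets borel"
  unfolding small_tri_def
  by (intro borel_closed compact_imp_closed compact_continuous_image compact_tri continuous_intros)

lemma small_tri_subset:
  assumes "0 < t" "t \<le> 1"
  shows "small_tri t \<subseteq> tri"
  unfolding small_tri_eq[OF assms(1)] tri_eq_chart_image using assms right_tri_mono[of t t 1 1] by auto

lemma nn_integral_small_tri_affine:
  fixes f :: "real \<times> real \<Rightarrow> real"
  assumes t: "0 < t" "t \<le> 1" and [measurable]: "f \<in> borel_measurable borel"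
    and affine: "\<And>z. f (chart z) = f P0 + fst z * (f P1 - f P0) + snd z * (f P2 - f P0)"
    and nonneg: "\<And>x. x \<in> tri \<Longrightarrow> 0 \<le> f x"
  shows "(\<integral>\<^sup>+x. indicator (small_tri t) x * ennreal (f x) \<partial>lborel)
      = ennreal (sqrt 3 / 4 * t^2 * f (chart (corner_centroid t t)))"
    and "0 \<le> f (chart (corner_centroid t t))"
proof -
  have "chart z \<in> tri" if "z \<in> right_tri t t" for z
    using small_tri_subset[OF t] small_tri_eq[OF t(1)] that by blast
  then have nonneg_chart: "0 \<le> f (chart z)" if "z \<in> right_tri t t" for z
    using nonneg that by blast
  have poly: "f (chart (x, y)) = f P0 + (f P1 - f P0) * x + (f P2 - f P0) * y + 0 * x^2 + 0 * x * y + 0 * y^2"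
    for x y
    using affine[of "(x, y)"] by simp
  have quadratic: "(\<integral>\<^sup>+z. indicator (right_tri t t) z * ennreal (f (chart z)) \<partial>lborel) = ennreal (t * t *
       (f P0/2 + (f P1 - f P0) * t/6 + (f P2 - f P0) * t/6 + 0 * t^2/12 + 0 * t * t/24 + 0 * t^2/12))"
    by (rule nn_integral_quadratic_right_tri(1)[OF t(1) t(1) nonneg_chart poly])
  have quadratic_nonneg:
    "0 \<le> t * t * (f P0/2 + (f P1 - f P0) * t/6 + (f P2 - f P0) * t/6 + 0 * t^2/12 + 0 * t * t/24 + 0 * t^2/12)"
    by (rule nn_integral_quadratic_right_tri(2)[OF t(1) t(1) nonneg_chart poly])
  have moment_value: "t * t * (f P0/2 + (f P1 - f P0) * t/6 + (f P2 - f P0) * t/6 + 0 * t^2/12 + 0 * t * t/24 + 0 * t^2/12)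
      = t^2 / 2 * f (chart (corner_centroid t t))"
    by (simp add: affine corner_centroid_def power2_eq_square field_simps)
  have "(\<lambda>x. indicator (small_tri t) x * ennreal (f x)) \<in> borel_measurable borel"
    by measurable
  then have "(\<integral>\<^sup>+x. indicator (small_tri t) x * ennreal (f x) \<partial>lborel)
      = ennreal (sqrt 3 / 2) * (\<integral>\<^sup>+z. indicator (small_tri t) (chart z) * ennreal (f (chart z)) \<partial>lborel)"
    by (rule nn_integral_chart)
  also have "(\<integral>\<^sup>+z. indicator (small_tri t) (chart z) * ennreal (f (chart z)) \<partial>lborel)
      = (\<integral>\<^sup>+z. indicator (right_tri t t) z * ennreal (f (chart z)) \<partial>lborel)"
    by (auto simp: small_tri_eq[OF t(1)] inj_image_mem_iff[OF inj_chart] indicator_def)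
  also have "\<dots> = ennreal (t^2 / 2 * f (chart (corner_centroid t t)))"
    unfolding quadratic moment_value ..
  also have "ennreal (sqrt 3 / 2) * ennreal (t^2 / 2 * f (chart (corner_centroid t t)))
      = ennreal (sqrt 3 / 4 * t^2 * f (chart (corner_centroid t t)))"
    by (simp add: ennreal_mult'[symmetric] algebra_simps)
  finally show "(\<integral>\<^sup>+x. indicator (small_tri t) x * ennreal (f x) \<partial>lborel)
      = ennreal (sqrt 3 / 4 * t^2 * f (chart (corner_centroid t t)))" .
  have "0 \<le> t^2 / 2 * f (chart (corner_centroid t t))"
    using quadratic_nonneg unfolding moment_value .
  then show "0 \<le> f (chart (corner_centroid t t))"
    using t by (simp add: zero_le_mult_iff)
qed

lemma set_integral_small_tri_affine:
  fixes f :: "real \<times> real \<Rightarrow> real"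
  assumes t: "0 < t" "t \<le> 1" and "continuous_on UNIV f"
    and affine: "\<And>z. f (chart z) = f P0 + fst z * (f P1 - f P0) + snd z * (f P2 - f P0)"
    and nonneg: "\<And>x. x \<in> tri \<Longrightarrow> 0 \<le> f x"
  shows "(LINT x:small_tri t|lborel. f x) = sqrt 3 / 4 * t^2 * f (chart (corner_centroid t t))"
proof -
  have [measurable]: "f \<in> borel_measurable borel"
    using assms(3) by (rule borel_measurable_continuous_onI)
  have "set_integrable lborel tri f"
    using assms(3) by (intro set_integrable_tri) (rule continuous_on_subset, auto)
  moreover have "small_tri t \<in> sets lborel"
    by measurable
  ultimately have "set_integrable lborel (small_tri t) f"
    by (rule set_integrable_subset[OF _ _ small_tri_subset[OF t]])
  moreover have "0 \<le> sqrt 3 / 4 * t^2 * f (chart (corner_centroid t t))"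
    using nn_integral_small_tri_affine(2)[OF t _ affine nonneg] by simp
  ultimately show ?thesis
    using small_tri_subset[OF t] nonneg nn_integral_small_tri_affine(1)[OF t _ affine nonneg]
    by (intro set_integral_eq_nn_integral_real) auto
qed

lemma small_tri_measure:
  assumes "0 < t" "t \<le> 1"
  shows "measure lborel (small_tri t) = sqrt 3 / 4 * t^2"
proof -
  have "emeasure lborel (small_tri t) = (\<integral>\<^sup>+x. indicator (small_tri t) x * ennreal 1 \<partial>lborel)"
    by simp
  also have "\<dots> = ennreal (sqrt 3 / 4 * t^2)"
    using nn_integral_small_tri_affine(1)[OF assms, of "\<lambda>_. 1"] by simp
  finally show ?thesis
    by (simp add: measure_def)
qed

lemma small_tri_integral:
  assumes "0 < t" "t \<le> 1"
  shows "(LINT x:small_tri t|lborel. x) = (sqrt 3 / 4 * t^2) *\<^sub>R chart (corner_centroid t t)"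
proof -
  have "set_integrable lborel tri (\<lambda>x. x)"
    by (rule set_integrable_tri[OF continuous_on_id])
  moreover have "small_tri t \<in> sets lborel"
    by measurable
  ultimately have "set_integrable lborel (small_tri t) (\<lambda>x. x)"
    by (rule set_integrable_subset[OF _ _ small_tri_subset[OF assms]])
  then have "fst (LINT x:small_tri t|lborel. x) = (LINT x:small_tri t|lborel. fst x)"
    "snd (LINT x:small_tri t|lborel. x) = (LINT x:small_tri t|lborel. snd x)"
    unfolding set_integrable_def set_lebesgue_integral_def
    using integral_fst[of lborel "\<lambda>x. indicator (small_tri t) x *\<^sub>R x"]
      integral_snd[of lborel "\<lambda>x. indicator (small_tri t) x *\<^sub>R x"] by simp_all
  moreover have "(LINT x:small_tri t|lborel. fst x) = sqrt 3 / 4 * t^2 * fst (chart (corner_centroid t t))"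
    "(LINT x:small_tri t|lborel. snd x) = sqrt 3 / 4 * t^2 * snd (chart (corner_centroid t t))"
    by (rule set_integral_small_tri_affine[OF assms]; auto intro: continuous_intros simp: chart_def tri_nonneg)+
  ultimately show ?thesis
    by (simp add: prod_eq_iff)
qed

lemma small_tri_one: "small_tri 1 = tri"
  by (simp add: small_tri_def)

lemma centroid_small_tri:
  assumes "0 < t" "t \<le> 1"
  shows "centroid (small_tri t) = chart (corner_centroid t t)"
  using assms by (simp add: centroid_def small_tri_measure small_tri_integral)

lemma trapezoid_measure:
  assumes "0 < t" "t \<le> 1"
  shows "measure lborel (tri - small_tri t) = sqrt 3 / 4 * (1 - t^2)"
proof -
  have "measure lborel (tri - small_tri t) = measure lborel tri - measure lborel (small_tri t)"
    using emeasure_compact_finite[OF compact_tri] small_tri_subset[OF assms]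
    by (intro measure_Diff) auto
  then show ?thesis
    using small_tri_measure[OF assms] small_tri_measure[of 1] by (simp add: small_tri_one algebra_simps)
qed

lemma trapezoid_integral:
  assumes "0 < t" "t \<le> 1"
  shows "(LINT x:tri - small_tri t|lborel. x) = (LINT x:tri|lborel. x) - (LINT x:small_tri t|lborel. x)"
proof -
  have int: "set_integrable lborel tri (\<lambda>x. x)"
    by (rule set_integrable_tri[OF continuous_on_id])
  have sets: "small_tri t \<in> sets lborel" "tri - small_tri t \<in> sets lborel"
    using small_tri_sets tri_sets by auto
  have "set_integrable lborel (tri - small_tri t) (\<lambda>x. x)"
    by (rule set_integrable_subset[OF int sets(2) Diff_subset])
  moreover have "set_integrable lborel (small_tri t) (\<lambda>x. x)"
    by (rule set_integrable_subset[OF int sets(1) small_tri_subset[OF assms]])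
  moreover have "(tri - small_tri t) \<inter> small_tri t = {}"
    by blast
  ultimately have "(LINT x:(tri - small_tri t) \<union> small_tri t|lborel. x)
      = (LINT x:tri - small_tri t|lborel. x) + (LINT x:small_tri t|lborel. x)"
    by (intro set_integral_Un)
  moreover have "(tri - small_tri t) \<union> small_tri t = tri"
    using small_tri_subset[OF assms] by blast
  ultimately have "(LINT x:tri|lborel. x) = (LINT x:tri - small_tri t|lborel. x) + (LINT x:small_tri t|lborel. x)"
    by (simp only:)
  then show ?thesis
    by (simp only: eq_diff_eq)
qed

lemma scaleR_chart_diff:
  assumes "(a - b) *\<^sub>R z = a *\<^sub>R p - b *\<^sub>R q"
  shows "(a - b) *\<^sub>R chart z = a *\<^sub>R chart p - b *\<^sub>R chart q"
proof -
  have comps: "(a - b) * fst z = a * fst p - b * fst q" "(a - b) * snd z = a * snd p - b * snd q"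
    using arg_cong[OF assms, of fst] arg_cong[OF assms, of snd] by simp_all
  have "(a - b) *\<^sub>R chart z = (a - b) *\<^sub>R P0 + ((a - b) * fst z) *\<^sub>R (P1 - P0) + ((a - b) * snd z) *\<^sub>R (P2 - P0)"
    by (simp add: chart_def scaleR_add_right)
  also have "\<dots> = (a - b) *\<^sub>R P0 + (a * fst p - b * fst q) *\<^sub>R (P1 - P0) + (a * snd p - b * snd q) *\<^sub>R (P2 - P0)"
    unfolding comps ..
  also have "\<dots> = a *\<^sub>R chart p - b *\<^sub>R chart q"
    by (simp add: chart_def scaleR_add_right scaleR_diff_left scaleR_diff_right)
  finally show ?thesis .
qed

lemma centroid_trapezoid:
  assumes "0 < t" "t < 1"
  shows "centroid (tri - small_tri t) = chart (complement_centroid t t)"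
proof -
  have "t^2 < 1"
    using assms by (simp add: power_less_one_iff)
  define c where "c = sqrt 3 / 4"
  have "c > 0"
    by (simp add: c_def)
  have "(c - c * t^2) *\<^sub>R complement_centroid t t = c *\<^sub>R corner_centroid 1 1 - (c * t^2) *\<^sub>R corner_centroid t t"
  proof -
    have "1 - t * t \<noteq> 0"
      using \<open>t^2 < 1\<close> by (simp add: power2_eq_square)
    then show ?thesis
      by (simp add: complement_centroid_def corner_centroid_def prod_eq_iff field_simps power2_eq_square)
  qed
  then have "(c - c * t^2) *\<^sub>R chart (complement_centroid t t)
      = c *\<^sub>R chart (corner_centroid 1 1) - (c * t^2) *\<^sub>R chart (corner_centroid t t)"
    by (rule scaleR_chart_diff)
  also have "\<dots> = (LINT x:tri - small_tri t|lborel. x)"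
    using assms small_tri_integral[of 1] small_tri_integral[of t]
    by (simp add: trapezoid_integral small_tri_one c_def)
  finally have "(LINT x:tri - small_tri t|lborel. x) = (c - c * t^2) *\<^sub>R chart (complement_centroid t t)" ..
  moreover have "measure lborel (tri - small_tri t) = c - c * t^2"
    using assms by (simp add: trapezoid_measure c_def right_diff_distrib)
  moreover have "c - c * t^2 \<noteq> 0"
    using \<open>c > 0\<close> \<open>t^2 < 1\<close> by simp
  ultimately show ?thesis
    by (simp add: centroid_def)
qed

lemma golden_cut_parameter:
  assumes "0 < t" "t < 1" and "measure lborel (tri - small_tri t) / measure lborel (small_tri t) = golden"
  shows "t = golden_inv"
proof -
  have "(1 - t^2) / t^2 = 1 + golden_inv"
    using assms by (simp add: trapezoid_measure small_tri_measure golden_eq)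
  then have "t^2 * (2 + golden_inv) = 1"
    using assms(1) by (simp add: field_simps)
  moreover have "golden_inv^2 * (2 + golden_inv) = 1"
    using golden_inv_sq golden_inv_cube by (simp add: power2_eq_square power3_eq_cube algebra_simps)
  ultimately have "t^2 * (2 + golden_inv) = golden_inv^2 * (2 + golden_inv)"
    by simp
  then have "t^2 = golden_inv^2"
    using golden_inv_bounds by simp
  then show ?thesis
    using assms golden_inv_bounds by (simp add: power2_eq_iff)
qed

lemma golden_cut_centroids:
  assumes "0 < t" "t < 1" "measure lborel (tri - small_tri t) / measure lborel (small_tri t) = golden"
  shows "{centroid (tri - small_tri t), centroid (small_tri t)} = golden_pair"
  using golden_cut_parameter[OF assms] centroid_trapezoid[OF assms(1,2)] centroid_small_tri[of t] assms(1,2)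
  by (simp add: golden_pair_def insert_commute)

end

section \<open>Optimal sets of two-means\<close>

lemma norm_Pair_sq_eq_one: "a^2 + b^2 = 1 \<Longrightarrow> norm (a :: real, b :: real) = 1"
  by (simp add: norm_Pair)

interpretation corner0: equilateral_frame "(0, 0)" "(1, 0)" "(1/2, sqrt 3 / 2)"
  by unfold_locales (simp_all add: tri_def norm_Pair_sq_eq_one power_divide)

interpretation corner1: equilateral_frame "(1, 0)" "(0, 0)" "(1/2, sqrt 3 / 2)"
  by unfold_locales (simp_all add: tri_def insert_commute norm_Pair_sq_eq_one power_divide)

interpretation corner2: equilateral_frame "(1/2, sqrt 3 / 2)" "(0, 0)" "(1, 0)"
  by unfold_locales (simp_all add: tri_def insert_commute norm_Pair_sq_eq_one power_divide)

definition golden_pairs :: "(real \<times> real) set set" where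
  "golden_pairs = {corner0.golden_pair, corner1.golden_pair, corner2.golden_pair}"

lemma distortion_pair_lower_bound_oriented:
  assumes "0 < dist_gap a b (0, 0) \<and> dist_gap a b (1, 0) \<le> 0 \<and> dist_gap a b (1/2, sqrt 3 / 2) \<le> 0
    \<or> 0 < dist_gap a b (1, 0) \<and> dist_gap a b (0, 0) \<le> 0 \<and> dist_gap a b (1/2, sqrt 3 / 2) \<le> 0
    \<or> 0 < dist_gap a b (1/2, sqrt 3 / 2) \<and> dist_gap a b (0, 0) \<le> 0 \<and> dist_gap a b (1, 0) \<le> 0
    \<or> 0 \<le> dist_gap a b (0, 0) \<and> 0 \<le> dist_gap a b (1, 0) \<and> 0 \<le> dist_gap a b (1/2, sqrt 3 / 2)"
  shows "\<exists>d. distortion P_tri {a, b} = ennreal d \<and> V2 \<le> d \<and> (d = V2 \<longrightarrow> {a, b} \<in> golden_pairs)"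
  using assms
proof (elim disjE conjE)
  assume "0 < dist_gap a b (0, 0)" "dist_gap a b (1, 0) \<le> 0" "dist_gap a b (1/2, sqrt 3 / 2) \<le> 0"
  then show ?thesis
    using corner0.distortion_pair_ge_V2[of a b] unfolding golden_pairs_def by blast
next
  assume "0 < dist_gap a b (1, 0)" "dist_gap a b (0, 0) \<le> 0" "dist_gap a b (1/2, sqrt 3 / 2) \<le> 0"
  then show ?thesis
    using corner1.distortion_pair_ge_V2[of a b] unfolding golden_pairs_def by blast
next
  assume "0 < dist_gap a b (1/2, sqrt 3 / 2)" "dist_gap a b (0, 0) \<le> 0" "dist_gap a b (1, 0) \<le> 0"
  then show ?thesis
    using corner2.distortion_pair_ge_V2[of a b] unfolding golden_pairs_def by blast
next
  assume "0 \<le> dist_gap a b (0, 0)" "0 \<le> dist_gap a b (1, 0)" "0 \<le> dist_gap a b (1/2, sqrt 3 / 2)"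
  then show ?thesis
    using corner0.distortion_pair_same_side_gt_V2 by fastforce
qed

lemma distortion_pair_lower_bound:
  "\<exists>d. distortion P_tri {a, b} = ennreal d \<and> V2 \<le> d \<and> (d = V2 \<longrightarrow> {a, b} \<in> golden_pairs)"
proof -
  have swap: "dist_gap b a x = - dist_gap a b x" for x
    by (simp add: dist_gap_def)
  consider "0 < dist_gap a b (0, 0) \<and> dist_gap a b (1, 0) \<le> 0 \<and> dist_gap a b (1/2, sqrt 3 / 2) \<le> 0
    \<or> 0 < dist_gap a b (1, 0) \<and> dist_gap a b (0, 0) \<le> 0 \<and> dist_gap a b (1/2, sqrt 3 / 2) \<le> 0
    \<or> 0 < dist_gap a b (1/2, sqrt 3 / 2) \<and> dist_gap a b (0, 0) \<le> 0 \<and> dist_gap a b (1, 0) \<le> 0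
    \<or> 0 \<le> dist_gap a b (0, 0) \<and> 0 \<le> dist_gap a b (1, 0) \<and> 0 \<le> dist_gap a b (1/2, sqrt 3 / 2)"
    | "0 < dist_gap b a (0, 0) \<and> dist_gap b a (1, 0) \<le> 0 \<and> dist_gap b a (1/2, sqrt 3 / 2) \<le> 0
    \<or> 0 < dist_gap b a (1, 0) \<and> dist_gap b a (0, 0) \<le> 0 \<and> dist_gap b a (1/2, sqrt 3 / 2) \<le> 0
    \<or> 0 < dist_gap b a (1/2, sqrt 3 / 2) \<and> dist_gap b a (0, 0) \<le> 0 \<and> dist_gap b a (1, 0) \<le> 0
    \<or> 0 \<le> dist_gap b a (0, 0) \<and> 0 \<le> dist_gap b a (1, 0) \<and> 0 \<le> dist_gap b a (1/2, sqrt 3 / 2)"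
    unfolding swap by linarith
  then show ?thesis
    using distortion_pair_lower_bound_oriented[of a b] distortion_pair_lower_bound_oriented[of b a]
    by cases (simp_all add: insert_commute)
qed

lemma distortion_lower_bound:
  assumes "admissible 2 \<alpha>"
  shows "\<exists>d. distortion P_tri \<alpha> = ennreal d \<and> V2 \<le> d \<and> (d = V2 \<longrightarrow> \<alpha> \<in> golden_pairs)"
proof -
  have "0 < card \<alpha>" "card \<alpha> \<le> 2"
    using assms by (simp_all add: admissible_def card_gt_0_iff)
  then have "card \<alpha> = 1 \<or> card \<alpha> = 2"
    by linarith
  then obtain a b where "\<alpha> = {a, b}"
    by (metis card_1_singletonE card_2_iff insert_absorb2)
  then show ?thesis
    using distortion_pair_lower_bound by simp
qed

lemma quant_err_P_tri_2: "quant_err P_tri 2 = ennreal V2"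
proof (rule antisym)
  show "quant_err P_tri 2 \<le> ennreal V2"
    unfolding quant_err_def using corner0.golden_pair_admissible corner0.distortion_golden_pair
    by (metis (mono_tags) INF_lower mem_Collect_eq)
  show "ennreal V2 \<le> quant_err P_tri 2"
    unfolding quant_err_def
    by (rule INF_greatest) (use distortion_lower_bound in \<open>force intro: ennreal_leI\<close>)
qed

lemma optimal_set_P_tri_2_iff: "optimal_set P_tri 2 \<alpha> \<longleftrightarrow> \<alpha> \<in> golden_pairs"
proof
  assume "optimal_set P_tri 2 \<alpha>"
  then have "admissible 2 \<alpha>" "distortion P_tri \<alpha> = ennreal V2"
    by (simp_all add: optimal_set_def quant_err_P_tri_2)
  moreover have "0 \<le> V2"
    using golden_inv_bounds by (simp add: V2_def max_gain_def)
  ultimately show "\<alpha> \<in> golden_pairs"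
    using distortion_lower_bound by (metis ennreal_inj order_trans)
next
  assume "\<alpha> \<in> golden_pairs"
  then show "optimal_set P_tri 2 \<alpha>"
    using corner0.golden_pair_admissible corner1.golden_pair_admissible corner2.golden_pair_admissible
      corner0.distortion_golden_pair corner1.distortion_golden_pair corner2.distortion_golden_pair
    by (auto simp: golden_pairs_def optimal_set_def quant_err_P_tri_2)
qed

lemma fst_golden_pairs:
  "fst ` corner0.golden_pair = {golden_inv / 2, golden_inv}"
  "fst ` corner1.golden_pair = {1 - golden_inv / 2, 1 - golden_inv}"
  "fst ` corner2.golden_pair = {1/2}"
  by (simp_all add: corner0.golden_pair_def corner1.golden_pair_def corner2.golden_pair_def
      corner0.chart_def corner1.chart_def corner2.chart_def corner_centroid_def complement_centroid_golden)

lemma card_golden_pairs: "card golden_pairs = 3"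
proof -
  have "golden_inv / 2 \<in> fst ` corner0.golden_pair" "1 - golden_inv / 2 \<in> fst ` corner1.golden_pair"
    unfolding fst_golden_pairs by simp_all
  moreover have "golden_inv / 2 \<notin> fst ` corner1.golden_pair" "golden_inv / 2 \<notin> fst ` corner2.golden_pair"
    "1 - golden_inv / 2 \<notin> fst ` corner2.golden_pair"
    unfolding fst_golden_pairs using golden_inv_bounds by auto
  ultimately have "corner0.golden_pair \<noteq> corner1.golden_pair" "corner0.golden_pair \<noteq> corner2.golden_pair"
    "corner1.golden_pair \<noteq> corner2.golden_pair"
    by auto
  then show ?thesis
    by (simp add: golden_pairs_def)
qed

lemma golden_cut_optimal:
  assumes "p \<in> {(0, 0), (1, 0), (1/2, sqrt 3 / 2)}" "0 < t" "t < 1"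
    and "measure lborel (tri - (\<lambda>x. p + t *\<^sub>R (x - p)) ` tri) / measure lborel ((\<lambda>x. p + t *\<^sub>R (x - p)) ` tri)
      = golden"
  shows "optimal_set P_tri 2 {centroid (tri - (\<lambda>x. p + t *\<^sub>R (x - p)) ` tri), centroid ((\<lambda>x. p + t *\<^sub>R (x - p)) ` tri)}"
proof -
  have "{centroid (tri - (\<lambda>x. p + t *\<^sub>R (x - p)) ` tri), centroid ((\<lambda>x. p + t *\<^sub>R (x - p)) ` tri)} \<in> golden_pairs"
    using assms corner0.golden_cut_centroids[of t] corner1.golden_cut_centroids[of t]
      corner2.golden_cut_centroids[of t]
    unfolding corner0.small_tri_def corner1.small_tri_def corner2.small_tri_def golden_pairs_def by auto
  then show ?thesis
    by (simp add: optimal_set_P_tri_2_iff)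
qed

theorem theorem3p1:
  shows "card {\<alpha>. optimal_set P_tri 2 \<alpha>} = 3
    \<and> (\<exists>v. quant_err P_tri 2 = ennreal v \<and> 0.05327665 \<le> v \<and> v < 0.05327675)
    \<and> (\<forall>p \<in> {(0,0), (1,0), (1/2, sqrt 3 / 2)}. \<forall>t::real. 0 < t \<and> t < 1 \<longrightarrow>
        (let small = (\<lambda>x. p + t *\<^sub>R (x - p)) ` tri; trap = tri - small in
          measure lborel trap / measure lborel small = golden \<longrightarrow>
          optimal_set P_tri 2 {centroid trap, centroid small}))"
proof (intro conjI)
  show "card {\<alpha>. optimal_set P_tri 2 \<alpha>} = 3"
    using card_golden_pairs by (simp add: optimal_set_P_tri_2_iff)
  show "\<exists>v. quant_err P_tri 2 = ennreal v \<and> 0.05327665 \<le> v \<and> v < 0.05327675"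
    using quant_err_P_tri_2 V2_bounds by blast
  show "\<forall>p \<in> {(0,0), (1,0), (1/2, sqrt 3 / 2)}. \<forall>t::real. 0 < t \<and> t < 1 \<longrightarrow>
        (let small = (\<lambda>x. p + t *\<^sub>R (x - p)) ` tri; trap = tri - small in
          measure lborel trap / measure lborel small = golden \<longrightarrow>
          optimal_set P_tri 2 {centroid trap, centroid small})"
    using golden_cut_optimal by (simp add: Let_def)
qed

end
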